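(* Let $p>2$ be prime, let $\mathcal{C}$ be a $\mathbb{Z}_p\mathbb{Z}_{p^2}$-additive code of type $(\alpha,\beta;\gamma,\delta;\kappa)$ with generator matrix $\mathcal{G}$, and let $C=\Phi(\mathcal{C})$ with $\ker(C)=\gamma+2\delta-\bar k$, where $\bar k\in\{1,2,\ldots,\delta\}$. Then there exists a set $\{\mathbf{v}_1,\ldots,\mathbf{v}_{\bar k}\}$ of rows of order $p^2$ in $\mathcal{G}$ with $\Phi(\mathbf{v}_i)\notin K(C)$ such that $$C=\bigcup_{a_1,\ldots,a_{\bar k}\in\mathbb{Z}_p}\left(K(C)+\Phi\left(\sum_{i=1}^{\bar k}a_i\mathbf{v}_i\right)\right).$$
   Context: A $\mathbb{Z}_p\mathbb{Z}_{p^2}$-additive code $\mathcal{C}$ is a subgroup of $\mathbb{Z}_p^\alpha\times\mathbb{Z}_{p^2}^\beta$; as a group $\mathcal{C}\cong\mathbb{Z}_p^\gamma\times\mathbb{Z}_{p^2}^\delta$, and if $\kappa$ is the $\mathbb{Z}_p$-dimension of the projection onto the first $\alpha$ coordinates of the subcode of codewords of order dividing $p$, $\mathcal{C}$ has type $(\alpha,\beta;\gamma,\delta;\kappa)$. A generator matrix $\mathcal{G}$ has rows $\mathbf{u}_1,\ldots,\mathbf{u}_\gamma$ of order $p$ and rows of order $p^2$, $\delta$ in number, such that every codeword is uniquely $\sum\lambda_i\mathbf{u}_i+\sum\nu_j\mathbf{v}_j$ ($\lambda_i\in\mathbb{Z}_p$, $\nu_j\in\mathbb{Z}_{p^2}$).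 The Gray map is $\phi(\theta)=\theta''(1,\ldots,1)+\theta'(0,1,\ldots,p-1)$ for $\theta=\theta''p+\theta'\in\mathbb{Z}_{p^2}$, $\theta',\theta''\in\{0,\ldots,p-1\}$, and $\Phi(\mathbf{x},\mathbf{y})=(\mathbf{x},\phi(y_1),\ldots,\phi(y_\beta))$. The kernel of $C\subseteq\mathbb{Z}_p^n$ is $K(C)=\{\mathbf{x}\in\mathbb{Z}_p^n\mid C+\mathbf{x}=C\}$, a $\mathbb{Z}_p$-linear space, and $\ker(C)$ is its dimension. Elements $a_i\in\mathbb{Z}_p$ are identified with integers in $\{0,\ldots,p-1\}$ when multiplying vectors. *)

theory Defs
  imports "HOL-Computational_Algebra.Primes"
begin

text \<open>Vectors over Z_m are int lists with entries in {0..<m}; a mixed vector in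
Z_p^alpha x Z_{p^2}^beta is a pair of int lists.\<close>

definition vadd :: "int \<Rightarrow> int list \<Rightarrow> int list \<Rightarrow> int list" where
  "vadd m xs ys = map2 (\<lambda>a b. (a + b) mod m) xs ys"

definition vsmul :: "int \<Rightarrow> int \<Rightarrow> int list \<Rightarrow> int list" where
  "vsmul m c xs = map (\<lambda>a. (c * a) mod m) xs"

definition madd :: "int \<Rightarrow> int list \<times> int list \<Rightarrow> int list \<times> int list \<Rightarrow> int list \<times> int list" where
  "madd p u v = (vadd p (fst u) (fst v), vadd (p^2) (snd u) (snd v))"

definition msmul :: "int \<Rightarrow> int \<Rightarrow> int list \<times> int list \<Rightarrow> int list \<times> int list" where
  "msmul p c u = (vsmul p c (fst u), vsmul (p^2) c (snd u))"

definition mzero :: "nat \<Rightarrow> nat \<Rightarrow> int list \<times> int list" where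
  "mzero \<alpha> \<beta> = (replicate \<alpha> 0, replicate \<beta> 0)"

definition is_mixed :: "int \<Rightarrow> nat \<Rightarrow> nat \<Rightarrow> int list \<times> int list \<Rightarrow> bool" where
  "is_mixed p \<alpha> \<beta> u \<longleftrightarrow> length (fst u) = \<alpha> \<and> length (snd u) = \<beta> \<and>
     set (fst u) \<subseteq> {0..<p} \<and> set (snd u) \<subseteq> {0..<p^2}"

definition msum :: "int \<Rightarrow> nat \<Rightarrow> nat \<Rightarrow> (int list \<times> int list) list \<Rightarrow> int list \<times> int list" where
  "msum p \<alpha> \<beta> us = foldr (madd p) us (mzero \<alpha> \<beta>)"

definition additive_code :: "int \<Rightarrow> nat \<Rightarrow> nat \<Rightarrow> (int list \<times> int list) set \<Rightarrow> bool" where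
  "additive_code p \<alpha> \<beta> C \<longleftrightarrow> C \<subseteq> {u. is_mixed p \<alpha> \<beta> u} \<and> mzero \<alpha> \<beta> \<in> C \<and>
     (\<forall>u\<in>C. \<forall>v\<in>C. madd p u v \<in> C) \<and> (\<forall>u\<in>C. msmul p (-1) u \<in> C)"

text \<open>Generator matrix: rows us (order p, gamma = length us) and vs (order p^2,
delta = length vs) such that every codeword is uniquely a combination.\<close>
definition generator_matrix :: "int \<Rightarrow> nat \<Rightarrow> nat \<Rightarrow> (int list \<times> int list) set \<Rightarrow>
    (int list \<times> int list) list \<Rightarrow> (int list \<times> int list) list \<Rightarrow> bool" where
  "generator_matrix p \<alpha> \<beta> C us vs \<longleftrightarrow>
     set us \<subseteq> C \<and> set vs \<subseteq> C \<and>
     (\<forall>u\<in>set us. u \<noteq> mzero \<alpha> \<beta> \<and> msmul p p u = mzero \<alpha> \<beta>) \<and>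
     (\<forall>v\<in>set vs. msmul p p v \<noteq> mzero \<alpha> \<beta> \<and> msmul p (p^2) v = mzero \<alpha> \<beta>) \<and>
     (\<forall>c\<in>C. \<exists>!lc. length (fst lc) = length us \<and> length (snd lc) = length vs \<and>
        set (fst lc) \<subseteq> {0..<p} \<and> set (snd lc) \<subseteq> {0..<p^2} \<and>
        c = madd p (msum p \<alpha> \<beta> (map2 (msmul p) (fst lc) us))
                   (msum p \<alpha> \<beta> (map2 (msmul p) (snd lc) vs)))"

definition phi :: "int \<Rightarrow> int \<Rightarrow> int list" where
  "phi p \<theta> = map (\<lambda>j. (\<theta> div p + (\<theta> mod p) * j) mod p) [0..p-1]"

definition Phi :: "int \<Rightarrow> int list \<times> int list \<Rightarrow> int list" where
  "Phi p u = fst u @ concat (map (phi p) (snd u))"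

definition kernel :: "int \<Rightarrow> nat \<Rightarrow> int list set \<Rightarrow> int list set" where
  "kernel p n D = {x. length x = n \<and> set x \<subseteq> {0..<p} \<and> (\<lambda>c. vadd p c x) ` D = D}"

definition lincomb :: "int \<Rightarrow> nat \<Rightarrow> int list \<Rightarrow> int list list \<Rightarrow> int list" where
  "lincomb p n cs B = foldr (vadd p) (map2 (vsmul p) cs B) (replicate n 0)"

definition zp_dim :: "int \<Rightarrow> nat \<Rightarrow> int list set \<Rightarrow> nat" where
  "zp_dim p n K = (THE d. \<exists>B. length B = d \<and> set B \<subseteq> K \<and>
      (\<forall>x\<in>K. \<exists>!cs. length cs = d \<and> set cs \<subseteq> {0..<p} \<and> x = lincomb p n cs B))"

end

theory Submission
  imports Defs "HOL-Algebra.Generated_Groups"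
begin

text \<open>Let \<open>H\<close> be the set of codewords whose Gray images lie in the kernel \<open>K = K(C)\<close>. The sum
  \<open>\<Phi>(x) + \<Phi>(y)\<close> is \<open>\<Phi>(x + y + z)\<close> for a carry \<open>z\<close> whose \<open>\<int>/p\<^sup>2\<close>-entries are divisible by \<open>p\<close>,
  and translation by the image of such a codeword preserves \<open>\<Phi>(C)\<close>. Hence \<open>H\<close> is a subgroup of
  \<open>C\<close> mapped bijectively onto \<open>K\<close> by \<open>\<Phi>\<close>, \<open>\<Phi>(h + c) \<in> K + \<Phi>(c)\<close> for \<open>h \<in> H\<close>, and \<open>H\<close> contains
  \<open>pC\<close> and the rows of order \<open>p\<close>. So \<open>C/H\<close> is an elementary abelian \<open>p\<close>-group spanned by the rows
  of order \<open>p\<^sup>2\<close>; greedily extracting a basis \<open>v\<^sub>1, \<dots>, v\<^sub>k\<close> of \<open>C/H\<close> from these rows gives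
  \<open>\<Phi>(C) = \<Union> (K + \<Phi>(\<Sum> a\<^sub>i v\<^sub>i))\<close>, and comparing
  \<open>p\<^bsup>\<gamma>+2\<delta>\<^esup> = |C| = p\<^sup>k |H| = p\<^sup>k |K| = p\<^bsup>k + ker(C)\<^esup>\<close> yields \<open>k = kb\<close>.\<close>

hide_const (open) Coset.kernel

section \<open>Bases modulo a subgroup\<close>

definition pow_prod :: "('a, 'b) monoid_scheme \<Rightarrow> 'a list \<Rightarrow> nat list \<Rightarrow> (nat \<Rightarrow> int) \<Rightarrow> 'a" where
  "pow_prod G gs ix a =
     foldr (\<otimes>\<^bsub>G\<^esub>) (map (\<lambda>j. (gs ! (ix ! j)) [^]\<^bsub>G\<^esub> a j) [0..<length ix]) \<one>\<^bsub>G\<^esub>"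

definition span_mod :: "('a, 'b) monoid_scheme \<Rightarrow> 'a set \<Rightarrow> int \<Rightarrow> 'a list \<Rightarrow> nat list \<Rightarrow> 'a set" where
  "span_mod G H p gs ix =
     {h \<otimes>\<^bsub>G\<^esub> pow_prod G gs ix a | h a. h \<in> H \<and> (\<forall>j<length ix. a j \<in> {0..<p})}"

text \<open>Independence of the selected generators modulo \<open>H\<close> over \<open>\<int>/p\<close> is expressed by counting:
  their span is a subgroup containing \<open>p ^ length ix\<close> cosets of \<open>H\<close>.\<close>
definition independent_mod :: "('a, 'b) monoid_scheme \<Rightarrow> 'a set \<Rightarrow> int \<Rightarrow> 'a list \<Rightarrow> nat list \<Rightarrow> bool" where
  "independent_mod G H p gs ix \<longleftrightarrow> distinct ix \<and> set ix \<subseteq> {..<length gs} \<and>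
     (\<forall>j\<in>set ix. gs ! j \<notin> H \<and> gs ! j \<in> span_mod G H p gs ix) \<and>
     subgroup (span_mod G H p gs ix) G \<and> H \<subseteq> span_mod G H p gs ix \<and>
     card (span_mod G H p gs ix) = nat p ^ length ix * card H"

lemma nth_nth_mem: "set ix \<subseteq> {..<length xs} \<Longrightarrow> j < length ix \<Longrightarrow> xs ! (ix ! j) \<in> set xs"
  by (meson lessThan_iff nth_mem subsetD)

context comm_group
begin

lemma foldr_mult_closed: "subgroup S G \<Longrightarrow> set xs \<subseteq> S \<Longrightarrow> foldr (\<otimes>) xs \<one> \<in> S"
  by (induction xs) (auto simp: subgroup.m_closed subgroup.one_closed)

lemma pow_prod_mem:
  assumes "subgroup S G" and "\<forall>j<length ix. gs ! (ix ! j) \<in> S"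
  shows "pow_prod G gs ix a \<in> S"
  unfolding pow_prod_def using assms by (auto intro!: foldr_mult_closed subgroup_int_pow_closed)

lemma pow_prod_closed:
  assumes "set gs \<subseteq> carrier G" and "set ix \<subseteq> {..<length gs}"
  shows "pow_prod G gs ix a \<in> carrier G"
  using assms nth_nth_mem by (intro pow_prod_mem[OF subgroup_self]) blast

lemma pow_prod_cong: "(\<And>j. j < length ix \<Longrightarrow> a j = b j) \<Longrightarrow> pow_prod G gs ix a = pow_prod G gs ix b"
  unfolding pow_prod_def by (intro arg_cong2[where f="\<lambda>x y. foldr _ x y"] map_cong) auto

lemma pow_prod_snoc:
  assumes "set gs \<subseteq> carrier G" and "set ix \<subseteq> {..<length gs}" and "i < length gs"
  shows "pow_prod G gs (ix @ [i]) a = pow_prod G gs ix a \<otimes> gs ! i [^] a (length ix)"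
proof -
  have shift: "foldr (\<otimes>) xs z = foldr (\<otimes>) xs \<one> \<otimes> z"
    if "set xs \<subseteq> carrier G" "z \<in> carrier G" for xs z
    using that foldr_mult_closed[OF subgroup_self]
    by (induction xs) (auto simp: m_assoc)
  have "gs ! (ix ! j) \<in> carrier G" if "j < length ix" for j
    using assms(1) nth_nth_mem[OF assms(2) that] by blast
  then have factors: "set (map (\<lambda>j. gs ! (ix ! j) [^] a j) [0..<length ix]) \<subseteq> carrier G"
    by auto
  have "gs ! i [^] a (length ix) \<in> carrier G"
    using assms(1,3) nth_mem int_pow_closed by blast
  moreover have snoc: "map (\<lambda>j. gs ! ((ix @ [i]) ! j) [^] a j) [0..<length (ix @ [i])]
      = map (\<lambda>j. gs ! (ix ! j) [^] a j) [0..<length ix] @ [gs ! i [^] a (length ix)]"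
    by (auto simp: nth_append)
  ultimately show ?thesis
    unfolding pow_prod_def snoc using shift[OF factors, of "gs ! i [^] a (length ix) \<otimes> \<one>"]
    by simp
qed

lemma span_mod_Nil: "H \<subseteq> carrier G \<Longrightarrow> span_mod G H p gs [] = H"
  unfolding span_mod_def pow_prod_def by force

lemma span_mod_snoc:
  assumes gs: "set gs \<subseteq> carrier G" and ix: "set ix \<subseteq> {..<length gs}" and i: "i < length gs"
    and H: "H \<subseteq> carrier G"
  shows "span_mod G H p gs (ix @ [i]) =
    {w \<otimes> gs ! i [^] c | w c. w \<in> span_mod G H p gs ix \<and> c \<in> {0..<p}}"
proof -
  have gi: "gs ! i \<in> carrier G" using gs i by auto
  have closed: "pow_prod G gs ix a \<in> carrier G" for a using pow_prod_closed[OF gs ix] .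
  have split: "h \<otimes> pow_prod G gs (ix @ [i]) a = (h \<otimes> pow_prod G gs ix a) \<otimes> gs ! i [^] a (length ix)"
    if "h \<in> H" for h a
    using that H closed gi by (simp add: pow_prod_snoc[OF gs ix i] m_assoc subsetD)
  show ?thesis
  proof (rule Set.set_eqI, rule iffI)
    fix x assume "x \<in> span_mod G H p gs (ix @ [i])"
    then obtain h a where h: "h \<in> H" "\<forall>j<Suc (length ix). a j \<in> {0..<p}"
      and x: "x = h \<otimes> pow_prod G gs (ix @ [i]) a"
      unfolding span_mod_def by auto
    have "h \<otimes> pow_prod G gs ix a \<in> span_mod G H p gs ix"
      using h unfolding span_mod_def by (auto intro!: exI[of _ a])
    then show "x \<in> {w \<otimes> gs ! i [^] c | w c. w \<in> span_mod G H p gs ix \<and> c \<in> {0..<p}}"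
      using h(2) unfolding x split[OF h(1)] by blast
  next
    fix x assume "x \<in> {w \<otimes> gs ! i [^] c | w c. w \<in> span_mod G H p gs ix \<and> c \<in> {0..<p}}"
    then obtain h a c where h: "h \<in> H" "\<forall>j<length ix. a j \<in> {0..<p}" "c \<in> {0..<p}"
      and x: "x = (h \<otimes> pow_prod G gs ix a) \<otimes> gs ! i [^] c"
      unfolding span_mod_def by auto
    define a' where "a' = a(length ix := c)"
    have "pow_prod G gs ix a' = pow_prod G gs ix a"
      by (rule pow_prod_cong) (simp add: a'_def)
    then have "x = h \<otimes> pow_prod G gs (ix @ [i]) a'"
      using x split[OF h(1), of a'] by (simp add: a'_def)
    moreover have "\<forall>j<length (ix @ [i]). a' j \<in> {0..<p}"
      using h by (auto simp: a'_def)
    ultimately show "x \<in> span_mod G H p gs (ix @ [i])"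
      using h(1) unfolding span_mod_def by blast
  qed
qed

lemma span_mod_subset:
  assumes "subgroup K G" and "H \<subseteq> K" and "set gs \<subseteq> K" and "set ix \<subseteq> {..<length gs}"
  shows "span_mod G H p gs ix \<subseteq> K"
  using assms nth_nth_mem[OF assms(4)]
  unfolding span_mod_def by (auto intro!: subgroup.m_closed[OF assms(1)] pow_prod_mem)

lemma mem_of_coprime_pows:
  assumes "subgroup W G" and "g \<in> carrier G" and "g [^] (p::int) \<in> W" and "g [^] (d::int) \<in> W"
    and "coprime d p"
  shows "g \<in> W"
proof -
  obtain u v where uv: "u * d + v * p = 1"
    using bezout_int[of d p] \<open>coprime d p\<close> by auto
  have "g = g [^] (u * d + v * p)"
    using uv assms(2) by (simp add: int_pow_1)
  also have "\<dots> = (g [^] d) [^] u \<otimes> (g [^] p) [^] v"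
    using assms(2) by (simp only: int_pow_mult int_pow_pow mult.commute)
  also have "\<dots> \<in> W"
    using subgroup.m_closed[OF assms(1) subgroup_int_pow_closed subgroup_int_pow_closed] assms(1,3,4)
    by blast
  finally show ?thesis .
qed

lemma subgroup_adjoin_pows:
  assumes W: "subgroup W G" and g: "g \<in> carrier G"
  shows "subgroup {w \<otimes> g [^] (c::int) | w c. w \<in> W} G"
proof (rule subgroupI)
  have Wc: "W \<subseteq> carrier G" using subgroup.subset[OF W] .
  then show "{w \<otimes> g [^] (c::int) | w c. w \<in> W} \<subseteq> carrier G"
    using g by auto
  show "{w \<otimes> g [^] (c::int) | w c. w \<in> W} \<noteq> {}"
    using subgroup.one_closed[OF W] by blast
  fix a assume "a \<in> {w \<otimes> g [^] (c::int) | w c. w \<in> W}"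
  then obtain w c where w: "w \<in> W" and a: "a = w \<otimes> g [^] (c::int)" by blast
  have "inv a = inv w \<otimes> g [^] (- c)"
    using a w Wc g by (simp add: inv_mult int_pow_neg subsetD)
  then show "inv a \<in> {w \<otimes> g [^] (c::int) | w c. w \<in> W}"
    using subgroup.m_inv_closed[OF W w] by blast
  fix b assume "b \<in> {w \<otimes> g [^] (c::int) | w c. w \<in> W}"
  then obtain w' c' where w': "w' \<in> W" and b: "b = w' \<otimes> g [^] (c'::int)" by blast
  have "a \<otimes> b = (w \<otimes> w') \<otimes> (g [^] c \<otimes> g [^] c')"
    using a b w w' Wc g by (simp add: m_ac subsetD)
  then have "a \<otimes> b = (w \<otimes> w') \<otimes> g [^] (c + c')"
    using g by (simp add: int_pow_mult)
  then show "a \<otimes> b \<in> {w \<otimes> g [^] (c::int) | w c. w \<in> W}"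
    using subgroup.m_closed[OF W w w'] by blast
qed

lemma adjoin_residue_pows_eq:
  assumes W: "subgroup W G" and g: "g \<in> carrier G" and "g [^] p \<in> W" and "p > (0::int)"
  shows "{w \<otimes> g [^] c | w c. w \<in> W \<and> c \<in> {0..<p}} = {w \<otimes> g [^] (c::int) | w c. w \<in> W}"
proof (rule Set.set_eqI, rule iffI)
  fix x
  show "x \<in> {w \<otimes> g [^] c | w c. w \<in> W \<and> c \<in> {0..<p}} \<Longrightarrow> x \<in> {w \<otimes> g [^] (c::int) | w c. w \<in> W}"
    by blast
  assume "x \<in> {w \<otimes> g [^] (c::int) | w c. w \<in> W}"
  then obtain w c where w: "w \<in> W" and x: "x = w \<otimes> g [^] (c::int)" by blast
  have "g [^] c = g [^] (p * (c div p) + c mod p)"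
    by simp
  also have "\<dots> = (g [^] p) [^] (c div p) \<otimes> g [^] (c mod p)"
    using g by (simp only: int_pow_mult int_pow_pow)
  finally have "g [^] c = (g [^] p) [^] (c div p) \<otimes> g [^] (c mod p)" .
  then have "x = (w \<otimes> (g [^] p) [^] (c div p)) \<otimes> g [^] (c mod p)"
    using x w g assms(3) subgroup.subset[OF W] by (simp add: m_assoc subsetD)
  moreover have "w \<otimes> (g [^] p) [^] (c div p) \<in> W"
    using subgroup.m_closed[OF W w subgroup_int_pow_closed[OF W assms(3)]] .
  moreover have "c mod p \<in> {0..<p}"
    using \<open>p > 0\<close> by simp
  ultimately show "x \<in> {w \<otimes> g [^] c | w c. w \<in> W \<and> c \<in> {0..<p}}"
    by blast
qed

text \<open>Distinct residues \<open>c, c'\<close> give disjoint cosets \<open>W g^c\<close>, since \<open>g^(c - c') \<in> W\<close> together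
  with \<open>g^p \<in> W\<close> would force \<open>g \<in> W\<close>.\<close>
lemma adjoin_root_residue_unique:
  assumes W: "subgroup W G" and g: "g \<in> carrier G" "g \<notin> W" "g [^] p \<in> W" and "prime (p::int)"
    and w: "w \<in> W" "w' \<in> W" and c: "c \<in> {0..<p}" "c' \<in> {0..<p}"
    and eq: "w \<otimes> g [^] c = w' \<otimes> g [^] c'"
  shows "c = c'"
proof (rule ccontr)
  assume "c \<noteq> c'"
  have wc: "w \<in> carrier G" "w' \<in> carrier G" using w subgroup.subset[OF W] by auto
  have "inv w \<otimes> (w' \<otimes> g [^] c') = inv w \<otimes> (w \<otimes> g [^] c)"
    by (simp add: eq)
  also have "\<dots> = g [^] c"
    using wc g by (simp add: m_assoc[symmetric])
  finally have "g [^] (c - c') = inv w \<otimes> (w' \<otimes> g [^] c') \<otimes> inv (g [^] c')"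
    using g by (simp add: int_pow_diff)
  also have "\<dots> = inv w \<otimes> w'"
    using wc g by (simp add: m_assoc)
  finally have "g [^] (c - c') \<in> W"
    using subgroup.m_closed[OF W subgroup.m_inv_closed[OF W w(1)] w(2)] by simp
  moreover have "coprime (c - c') p"
  proof -
    have "\<not> p dvd (c - c')"
      using c \<open>c \<noteq> c'\<close> dvd_imp_le_int[of "c - c'" p] by auto
    then show ?thesis
      using prime_imp_coprime[OF \<open>prime p\<close>] coprime_commute by blast
  qed
  ultimately show False
    using mem_of_coprime_pows[OF W g(1,3)] g(2) by blast
qed

lemma card_adjoin_root:
  assumes W: "subgroup W G" "finite W" and g: "g \<in> carrier G" "g \<notin> W" "g [^] p \<in> W"
    and "prime p"
  shows "card {w \<otimes> g [^] c | w c. w \<in> W \<and> c \<in> {0..<p}} = nat p * card W"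
proof -
  have Wc: "W \<subseteq> carrier G" using subgroup.subset[OF W(1)] .
  have disjoint: "(\<lambda>w. w \<otimes> g [^] c) ` W \<inter> (\<lambda>w. w \<otimes> g [^] c') ` W = {}"
    if "c \<in> {0..<p}" "c' \<in> {0..<p}" "c \<noteq> c'" for c c'
    using adjoin_root_residue_unique[OF W(1) g \<open>prime p\<close> _ _ that(1,2)] that(3) by blast
  have inj: "inj_on (\<lambda>w. w \<otimes> g [^] c) W" for c :: int
    using Wc g by (intro inj_onI) (simp add: subsetD)
  have "{w \<otimes> g [^] c | w c. w \<in> W \<and> c \<in> {0..<p}} = (\<Union>c\<in>{0..<p}. (\<lambda>w. w \<otimes> g [^] c) ` W)"
    by blast
  also have "card \<dots> = (\<Sum>c\<in>{0..<p}. card ((\<lambda>w. w \<otimes> g [^] c) ` W))"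
    using W(2) disjoint by (intro card_UN_disjoint) auto
  also have "\<dots> = (\<Sum>c\<in>{0..<p}. card W)"
    using inj by (simp add: card_image)
  finally show ?thesis
    by simp
qed

lemma independent_mod_snoc:
  assumes "finite (carrier G)" and H: "subgroup H G" and "prime p" and gs: "set gs \<subseteq> carrier G"
    and ind: "independent_mod G H p gs ix" and i: "i < length gs"
    and "gs ! i [^] p \<in> H" and new: "gs ! i \<notin> span_mod G H p gs ix"
  shows "independent_mod G H p gs (ix @ [i]) \<and> span_mod G H p gs ix \<subseteq> span_mod G H p gs (ix @ [i])"
proof -
  define W where "W = span_mod G H p gs ix"
  define g where "g = gs ! i"
  have W: "subgroup W G" and HW: "H \<subseteq> W" and ix: "set ix \<subseteq> {..<length gs}"
    and cardW: "card W = nat p ^ length ix * card H"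
    and old: "\<forall>j\<in>set ix. gs ! j \<notin> H \<and> gs ! j \<in> W" and "distinct ix"
    using ind unfolding independent_mod_def W_def by auto
  have g: "g \<in> carrier G" "g \<notin> W" "g [^] p \<in> W"
    using gs i new HW \<open>gs ! i [^] p \<in> H\<close> by (auto simp: g_def W_def)
  have "p > 0" using \<open>prime p\<close> prime_gt_0_int by blast
  have W'_residues: "span_mod G H p gs (ix @ [i]) = {w \<otimes> g [^] c | w c. w \<in> W \<and> c \<in> {0..<p}}"
    unfolding W_def g_def by (rule span_mod_snoc[OF gs ix i subgroup.subset[OF H]])
  also have "\<dots> = {w \<otimes> g [^] (c::int) | w c. w \<in> W}"
    by (rule adjoin_residue_pows_eq[OF W g(1,3) \<open>p > 0\<close>])
  finally have W': "span_mod G H p gs (ix @ [i]) = {w \<otimes> g [^] (c::int) | w c. w \<in> W}" .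
  have W_sub: "W \<subseteq> span_mod G H p gs (ix @ [i])"
  proof
    fix w assume "w \<in> W"
    then have "w = w \<otimes> g [^] (0::int)"
      using subgroup.subset[OF W] by auto
    then show "w \<in> span_mod G H p gs (ix @ [i])"
      unfolding W' using \<open>w \<in> W\<close> by blast
  qed
  have "g = \<one> \<otimes> g [^] (1::int)"
    using g(1) by simp
  then have g_mem: "g \<in> span_mod G H p gs (ix @ [i])"
    unfolding W' using subgroup.one_closed[OF W] by blast
  have card: "card (span_mod G H p gs (ix @ [i])) = nat p * card W"
    unfolding W'_residues using card_adjoin_root[OF W _ g \<open>prime p\<close>]
      finite_subset[OF subgroup.subset[OF W] \<open>finite (carrier G)\<close>] by blast
  have sub: "subgroup (span_mod G H p gs (ix @ [i])) G"
    unfolding W' using subgroup_adjoin_pows[OF W g(1)] .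
  have "i \<notin> set ix" and "g \<notin> H"
    using old g(2) HW by (auto simp: g_def)
  then have "distinct (ix @ [i])" and "set (ix @ [i]) \<subseteq> {..<length gs}"
    and "\<forall>j\<in>set (ix @ [i]). gs ! j \<notin> H \<and> gs ! j \<in> span_mod G H p gs (ix @ [i])"
    using \<open>distinct ix\<close> ix i old W_sub g_mem by (auto simp: g_def)
  then show ?thesis
    unfolding independent_mod_def using sub card cardW HW W_sub by (simp add: W_def)
qed

lemma exists_independent_mod:
  assumes "finite (carrier G)" and H: "subgroup H G" and "prime p" and gs: "set gs \<subseteq> carrier G"
    and pow: "\<forall>g\<in>set gs. g [^] p \<in> H"
  shows "\<exists>ix. independent_mod G H p gs ix \<and> span_mod G H p gs ix = generate G (H \<union> set gs)"
proof -
  have "\<exists>ix. independent_mod G H p gs ix \<and> set (take n gs) \<subseteq> span_mod G H p gs ix" for n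
  proof (induction n)
    case 0
    show ?case
      using H by (intro exI[of _ "[]"]) (simp add: independent_mod_def span_mod_Nil subgroup.subset)
  next
    case (Suc n)
    then obtain ix where ix: "independent_mod G H p gs ix" "set (take n gs) \<subseteq> span_mod G H p gs ix"
      by blast
    show ?case
    proof (cases "n < length gs \<and> gs ! n \<notin> span_mod G H p gs ix")
      case True
      then have "independent_mod G H p gs (ix @ [n])"
        and "span_mod G H p gs ix \<subseteq> span_mod G H p gs (ix @ [n])"
        using independent_mod_snoc[OF assms(1) H \<open>prime p\<close> gs ix(1)] pow by auto
      moreover from this(1) have "gs ! n \<in> span_mod G H p gs (ix @ [n])"
        unfolding independent_mod_def by simp
      ultimately show ?thesis
        using True ix(2) by (auto simp: take_Suc_conv_app_nth)
    next
      case False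
      then have "set (take (Suc n) gs) \<subseteq> span_mod G H p gs ix"
        using ix(2) by (cases "n < length gs") (auto simp: take_Suc_conv_app_nth)
      then show ?thesis
        using ix(1) by blast
    qed
  qed
  from this[of "length gs"] obtain ix where ix: "independent_mod G H p gs ix"
    and "set gs \<subseteq> span_mod G H p gs ix" by auto
  moreover have "span_mod G H p gs ix \<subseteq> K" if "subgroup K G" "H \<union> set gs \<subseteq> K" for K
    using span_mod_subset[OF that(1)] that(2) ix unfolding independent_mod_def by auto
  ultimately have "span_mod G H p gs ix = generate G (H \<union> set gs)"
    by (intro generateI) (auto simp: independent_mod_def)
  then show ?thesis
    using ix by blast
qed

end

section \<open>The group \<open>\<int>/p\<^sup>n\<close>, kernels and dimension\<close>

lemma set_subset_conv_nth: "set xs \<subseteq> A \<longleftrightarrow> (\<forall>i<length xs. xs ! i \<in> A)"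
  by (simp add: subset_code(1) all_set_conv_all_nth)

lemma vadd_length [simp]: "length (vadd m xs ys) = min (length xs) (length ys)"
  by (simp add: vadd_def)

lemma vadd_nth [simp]:
  "i < length xs \<Longrightarrow> i < length ys \<Longrightarrow> vadd m xs ys ! i = (xs ! i + ys ! i) mod m"
  by (simp add: vadd_def)

lemma vsmul_length [simp]: "length (vsmul m c xs) = length xs"
  by (simp add: vsmul_def)

lemma vsmul_nth [simp]: "i < length xs \<Longrightarrow> vsmul m c xs ! i = (c * xs ! i) mod m"
  by (simp add: vsmul_def)

lemma vadd_comm: "vadd m xs ys = vadd m ys xs"
  by (rule nth_equalityI) (auto simp: add.commute)

lemma vadd_assoc: "vadd m (vadd m xs ys) zs = vadd m xs (vadd m ys zs)"
  by (rule nth_equalityI) (auto simp: mod_add_left_eq mod_add_right_eq add.assoc)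

lemma vadd_append:
  "length xs = length ys \<Longrightarrow> vadd m (xs @ xs') (ys @ ys') = vadd m xs ys @ vadd m xs' ys'"
  by (simp add: vadd_def)

lemma vadd_range: "m > 0 \<Longrightarrow> set (vadd m xs ys) \<subseteq> {0..<m}"
  by (auto simp: set_subset_conv_nth)

lemma vsmul_range: "m > 0 \<Longrightarrow> set (vsmul m c xs) \<subseteq> {0..<m}"
  by (auto simp: set_subset_conv_nth)

lemma replicate_zero_range: "m > 0 \<Longrightarrow> set (replicate n (0::int)) \<subseteq> {0..<m}"
  by (simp add: set_replicate_conv_if)

lemma vadd_zero_left: "length x = n \<Longrightarrow> set x \<subseteq> {0..<m} \<Longrightarrow> vadd m (replicate n 0) x = x"
  by (rule nth_equalityI) (auto simp: set_subset_conv_nth)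

lemma vadd_zero_right: "length x = n \<Longrightarrow> set x \<subseteq> {0..<m} \<Longrightarrow> vadd m x (replicate n 0) = x"
  using vadd_zero_left vadd_comm by metis

lemma vadd_neg_left: "length x = n \<Longrightarrow> vadd m (vsmul m (-1) x) x = replicate n 0"
  by (rule nth_equalityI) (auto simp: mod_add_left_eq)

definition vec_group :: "int \<Rightarrow> nat \<Rightarrow> int list monoid" where
  "vec_group p n = \<lparr>carrier = {x. length x = n \<and> set x \<subseteq> {0..<p}}, mult = vadd p, one = replicate n 0\<rparr>"

lemma vec_group_simps [simp]:
  "carrier (vec_group p n) = {x. length x = n \<and> set x \<subseteq> {0..<p}}"
  "mult (vec_group p n) = vadd p"
  "one (vec_group p n) = replicate n 0"
  by (simp_all add: vec_group_def)

lemma comm_group_vec_group: "p > 0 \<Longrightarrow> comm_group (vec_group p n)"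
proof (rule comm_groupI, goal_cases)
  case (6 x)
  then show ?case
    using vadd_neg_left[of x n p] vsmul_range by (intro bexI[of _ "vsmul p (-1) x"]) auto
qed (simp_all add: vadd_range replicate_zero_range vadd_assoc vadd_zero_left, metis vadd_comm)

lemma finite_coeff_lists: "finite {cs. length cs = d \<and> set cs \<subseteq> {0..<(p::int)}}"
  using finite_lists_length_eq[of "{0..<p}" d] by (simp add: conj_commute)

lemma card_coeff_lists: "card {cs. length cs = d \<and> set cs \<subseteq> {0..<(p::int)}} = nat p ^ d"
  using card_lists_length_eq[of "{0..<p}" d] by (simp add: conj_commute)

lemma finite_vec_group: "finite (carrier (vec_group p n))"
  using finite_coeff_lists[of n p] by simp

lemma vec_group_int_pow:
  assumes "p > 0" and x: "x \<in> carrier (vec_group p n)" and "c \<ge> 0"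
  shows "x [^]\<^bsub>vec_group p n\<^esub> c = vsmul p c x"
proof -
  have "x [^]\<^bsub>vec_group p n\<^esub> k = vsmul p (int k) x" for k :: nat
    using x by (induction k) (auto intro!: nth_equalityI simp: mod_add_left_eq distrib_right add.commute mod_add_right_eq)
  then show ?thesis
    using pow_nat[of c "vec_group p n" x] \<open>c \<ge> 0\<close> by simp
qed

lemma vec_group_inv:
  assumes "p > 0" and "x \<in> carrier (vec_group p n)"
  shows "inv\<^bsub>vec_group p n\<^esub> x = vsmul p (-1) x"
  using assms comm_group.axioms(2)[OF comm_group_vec_group[OF \<open>p > 0\<close>]]
  by (intro group.inv_equality) (auto simp: vadd_neg_left vsmul_range)

lemma kernel_translate_mem: "x \<in> kernel p n D \<Longrightarrow> c \<in> D \<Longrightarrow> vadd p c x \<in> D"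
  unfolding Defs.kernel_def by blast

lemma kernel_subset_carrier: "kernel p n D \<subseteq> carrier (vec_group p n)"
  unfolding Defs.kernel_def by auto

lemma kernel_subset:
  assumes "D \<subseteq> carrier (vec_group p n)" and "replicate n 0 \<in> D"
  shows "kernel p n D \<subseteq> D"
proof
  fix x assume x: "x \<in> kernel p n D"
  have "vadd p (replicate n 0) x \<in> D"
    using kernel_translate_mem[OF x assms(2)] .
  then show "x \<in> D"
    using x kernel_subset_carrier vadd_zero_left by fastforce
qed

lemma subgroup_kernel:
  assumes "p > 0" and D: "D \<subseteq> carrier (vec_group p n)"
  shows "subgroup (kernel p n D) (vec_group p n)"
proof
  show "kernel p n D \<subseteq> carrier (vec_group p n)"
    by (rule kernel_subset_carrier)
next
  fix x y assume x: "x \<in> kernel p n D" and y: "y \<in> kernel p n D"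
  have "(\<lambda>c. vadd p c (vadd p x y)) ` D = (\<lambda>c. vadd p c y) ` ((\<lambda>c. vadd p c x) ` D)"
    by (simp add: image_image vadd_assoc)
  also have "\<dots> = D"
    using x y unfolding Defs.kernel_def by simp
  finally show "x \<otimes>\<^bsub>vec_group p n\<^esub> y \<in> kernel p n D"
    using x y \<open>p > 0\<close> unfolding Defs.kernel_def by (simp add: vadd_range)
next
  have "(\<lambda>c. vadd p c (replicate n 0)) ` D = (\<lambda>c. c) ` D"
    using D vadd_zero_right by (intro image_cong) auto
  then have "(\<lambda>c. vadd p c (replicate n 0)) ` D = D"
    by simp
  then show "\<one>\<^bsub>vec_group p n\<^esub> \<in> kernel p n D"
    using \<open>p > 0\<close> unfolding Defs.kernel_def by (simp add: replicate_zero_range)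
next
  fix x assume x: "x \<in> kernel p n D"
  then have "length x = n" and shift: "(\<lambda>c. vadd p c x) ` D = D"
    unfolding Defs.kernel_def by auto
  have "vadd p (vadd p c x) (vsmul p (-1) x) = c" if "c \<in> D" for c
  proof -
    have "vadd p (vadd p c x) (vsmul p (-1) x) = vadd p c (vadd p (vsmul p (-1) x) x)"
      by (simp add: vadd_assoc vadd_comm[of p x])
    also have "\<dots> = c"
      using that D vadd_zero_right by (auto simp: vadd_neg_left[OF \<open>length x = n\<close>])
    finally show ?thesis .
  qed
  then have "(\<lambda>c. vadd p c (vsmul p (-1) x)) ` ((\<lambda>c. vadd p c x) ` D) = (\<lambda>c. c) ` D"
    unfolding image_image by (intro image_cong) auto
  then have "(\<lambda>c. vadd p c (vsmul p (-1) x)) ` D = D"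
    using shift by simp
  moreover have "inv\<^bsub>vec_group p n\<^esub> x = vsmul p (-1) x"
    using vec_group_inv[OF \<open>p > 0\<close>] x kernel_subset_carrier by blast
  ultimately show "inv\<^bsub>vec_group p n\<^esub> x \<in> kernel p n D"
    using \<open>length x = n\<close> vsmul_range[OF \<open>p > 0\<close>] unfolding Defs.kernel_def by simp
qed

definition is_basis :: "int \<Rightarrow> nat \<Rightarrow> int list set \<Rightarrow> int list list \<Rightarrow> bool" where
  "is_basis p n K B \<longleftrightarrow> set B \<subseteq> K \<and>
     (\<forall>x\<in>K. \<exists>!cs. length cs = length B \<and> set cs \<subseteq> {0..<p} \<and> x = lincomb p n cs B)"

lemma vec_group_pow_p:
  assumes "p > 0" and x: "x \<in> carrier (vec_group p n)"
  shows "x [^]\<^bsub>vec_group p n\<^esub> p = \<one>\<^bsub>vec_group p n\<^esub>"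
proof -
  have "x [^]\<^bsub>vec_group p n\<^esub> p = vsmul p p x"
    using vec_group_int_pow[OF \<open>p > 0\<close> x] \<open>p > 0\<close> by simp
  also have "\<dots> = replicate n 0"
    using x by (intro nth_equalityI) auto
  finally show ?thesis
    by simp
qed

lemma lincomb_mem:
  assumes "p > 0" and K: "subgroup K (vec_group p n)" and "set B \<subseteq> K" and "set cs \<subseteq> {0..<p}"
  shows "lincomb p n cs B \<in> K"
proof -
  interpret V: comm_group "vec_group p n"
    using comm_group_vec_group[OF \<open>p > 0\<close>] .
  have "vsmul p c b \<in> K" if "c \<in> set cs" "b \<in> set B" for c b
  proof -
    have "b \<in> K" and "c \<ge> 0"
      using that assms by auto
    then have "vsmul p c b = b [^]\<^bsub>vec_group p n\<^esub> c"
      using vec_group_int_pow[OF \<open>p > 0\<close>] subgroup.subset[OF K] by auto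
    then show ?thesis
      using V.subgroup_int_pow_closed[OF K \<open>b \<in> K\<close>] by simp
  qed
  then have "set (map2 (vsmul p) cs B) \<subseteq> K"
    by (auto dest: set_zip_leftD set_zip_rightD)
  then show ?thesis
    using V.foldr_mult_closed[OF K] unfolding lincomb_def by simp
qed

lemma lincomb_eq_pow_prod:
  assumes "p > 0" and gs: "set gs \<subseteq> carrier (vec_group p n)" and ix: "set ix \<subseteq> {..<length gs}"
    and a: "\<forall>j<length ix. a j \<ge> 0"
  shows "lincomb p n (map a [0..<length ix]) (map (\<lambda>j. gs ! (ix ! j)) [0..<length ix])
    = pow_prod (vec_group p n) gs ix a"
proof -
  have pow: "vsmul p (a j) (gs ! (ix ! j)) = gs ! (ix ! j) [^]\<^bsub>vec_group p n\<^esub> a j"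
    if "j < length ix" for j
    using vec_group_int_pow[OF \<open>p > 0\<close>] gs nth_nth_mem[OF ix that] a that by auto
  have "map2 (vsmul p) (map a xs) (map b xs) = map (\<lambda>j. vsmul p (a j) (b j)) xs"
    for xs and b :: "nat \<Rightarrow> int list"
    by (induction xs) auto
  then have "map2 (vsmul p) (map a [0..<length ix]) (map (\<lambda>j. gs ! (ix ! j)) [0..<length ix])
      = map (\<lambda>j. vsmul p (a j) (gs ! (ix ! j))) [0..<length ix]" .
  also have "\<dots> = map (\<lambda>j. gs ! (ix ! j) [^]\<^bsub>vec_group p n\<^esub> a j) [0..<length ix]"
    using pow by (intro map_cong) auto
  finally show ?thesis
    unfolding lincomb_def pow_prod_def by simp
qed

lemma card_eq_if_is_basis:
  assumes "p > 0" and K: "subgroup K (vec_group p n)" and B: "is_basis p n K B"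
  shows "card K = nat p ^ length B"
proof -
  define A where "A = {cs. length cs = length B \<and> set cs \<subseteq> {0..<p}}"
  have "bij_betw (\<lambda>cs. lincomb p n cs B) A K"
  proof (rule bij_betw_imageI)
    show "inj_on (\<lambda>cs. lincomb p n cs B) A"
      using B lincomb_mem[OF \<open>p > 0\<close> K] unfolding is_basis_def A_def inj_on_def by blast
    show "(\<lambda>cs. lincomb p n cs B) ` A = K"
      using B lincomb_mem[OF \<open>p > 0\<close> K] unfolding is_basis_def A_def by blast
  qed
  then show ?thesis
    using bij_betw_same_card card_coeff_lists unfolding A_def by metis
qed

lemma is_basisI_card:
  assumes "p > 0" and K: "subgroup K (vec_group p n)" and "set B \<subseteq> K"
    and span: "K \<subseteq> (\<lambda>cs. lincomb p n cs B) ` {cs. length cs = length B \<and> set cs \<subseteq> {0..<p}}"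
    and card: "card K = nat p ^ length B"
  shows "is_basis p n K B"
proof -
  define A where "A = {cs. length cs = length B \<and> set cs \<subseteq> {0..<p}}"
  have image: "(\<lambda>cs. lincomb p n cs B) ` A = K"
    using span lincomb_mem[OF \<open>p > 0\<close> K \<open>set B \<subseteq> K\<close>] unfolding A_def by blast
  moreover have "card A = card K"
    using card card_coeff_lists unfolding A_def by metis
  ultimately have "inj_on (\<lambda>cs. lincomb p n cs B) A"
    using finite_coeff_lists eq_card_imp_inj_on unfolding A_def by metis
  then show ?thesis
    using image \<open>set B \<subseteq> K\<close> unfolding is_basis_def A_def inj_on_def by blast
qed

lemma exists_is_basis:
  assumes "prime p" and K: "subgroup K (vec_group p n)"
  shows "\<exists>B. is_basis p n K B"
proof -
  let ?V = "vec_group p n"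
  have "p > 0" using \<open>prime p\<close> prime_gt_0_int by blast
  interpret V: comm_group ?V
    using comm_group_vec_group[OF \<open>p > 0\<close>] .
  have Kc: "K \<subseteq> carrier ?V" using subgroup.subset[OF K] .
  obtain gs where gs: "set gs = K"
    using finite_list finite_subset[OF Kc finite_vec_group] by blast
  have "\<forall>g\<in>set gs. g [^]\<^bsub>?V\<^esub> p \<in> {\<one>\<^bsub>?V\<^esub>}"
    using vec_group_pow_p[OF \<open>p > 0\<close>] gs Kc by blast
  moreover have "K = generate ?V ({\<one>\<^bsub>?V\<^esub>} \<union> set gs)"
    using K gs subgroup.one_closed[OF K] by (intro V.generateI) auto
  ultimately obtain ix where ix: "independent_mod ?V {\<one>\<^bsub>?V\<^esub>} p gs ix"
    and span: "span_mod ?V {\<one>\<^bsub>?V\<^esub>} p gs ix = K"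
    using V.exists_independent_mod[OF finite_vec_group V.triv_subgroup \<open>prime p\<close>] gs Kc by metis
  have ix_range: "set ix \<subseteq> {..<length gs}"
    using ix unfolding independent_mod_def by blast
  define B where "B = map (\<lambda>j. gs ! (ix ! j)) [0..<length ix]"
  have "set B \<subseteq> K"
    using nth_nth_mem[OF ix_range] gs unfolding B_def by auto
  moreover have "card K = nat p ^ length B"
    using ix span unfolding independent_mod_def B_def by simp
  moreover have "K \<subseteq> (\<lambda>cs. lincomb p n cs B) ` {cs. length cs = length B \<and> set cs \<subseteq> {0..<p}}"
  proof
    fix x assume "x \<in> K"
    then obtain a where a: "\<forall>j<length ix. a j \<in> {0..<p}"
      and x: "x = \<one>\<^bsub>?V\<^esub> \<otimes>\<^bsub>?V\<^esub> pow_prod ?V gs ix a"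
      using span unfolding span_mod_def by blast
    have "x = pow_prod ?V gs ix a"
      using x V.pow_prod_closed[OF _ ix_range] gs Kc by (simp add: vadd_zero_left)
    also have "\<dots> = lincomb p n (map a [0..<length ix]) B"
      using lincomb_eq_pow_prod[OF \<open>p > 0\<close> _ ix_range] gs Kc a unfolding B_def by simp
    finally have "x = lincomb p n (map a [0..<length ix]) B" .
    moreover have "map a [0..<length ix] \<in> {cs. length cs = length B \<and> set cs \<subseteq> {0..<p}}"
      using a unfolding B_def by auto
    ultimately show "x \<in> (\<lambda>cs. lincomb p n cs B) ` {cs. length cs = length B \<and> set cs \<subseteq> {0..<p}}"
      by blast
  qed
  ultimately show ?thesis
    using is_basisI_card[OF \<open>p > 0\<close> K] by blast
qed

lemma card_eq_zp_dim:
  assumes "prime p" and K: "subgroup K (vec_group p n)"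
  shows "card K = nat p ^ zp_dim p n K"
proof -
  have p: "p > 1" using \<open>prime p\<close> prime_gt_1_int by blast
  obtain B where B: "is_basis p n K B"
    using exists_is_basis[OF assms] by blast
  have "zp_dim p n K = length B"
    unfolding zp_dim_def
  proof (rule the_equality)
    show "\<exists>B'. length B' = length B \<and> set B' \<subseteq> K \<and>
        (\<forall>x\<in>K. \<exists>!cs. length cs = length B \<and> set cs \<subseteq> {0..<p} \<and> x = lincomb p n cs B')"
      using B unfolding is_basis_def by blast
  next
    fix d assume "\<exists>B'. length B' = d \<and> set B' \<subseteq> K \<and>
        (\<forall>x\<in>K. \<exists>!cs. length cs = d \<and> set cs \<subseteq> {0..<p} \<and> x = lincomb p n cs B')"
    then obtain B' where "is_basis p n K B'" and "length B' = d"
      unfolding is_basis_def by blast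
    then have "nat p ^ d = nat p ^ length B"
      using card_eq_if_is_basis[OF _ K] B p by (metis zero_less_one order.strict_trans)
    then show "d = length B"
      using p by (simp add: power_inject_exp)
  qed
  then show ?thesis
    using card_eq_if_is_basis[OF _ K B] p by simp
qed

section \<open>The mixed group and additive codes\<close>

lemma is_mixed_madd: "p > 0 \<Longrightarrow> is_mixed p \<alpha> \<beta> u \<Longrightarrow> is_mixed p \<alpha> \<beta> v \<Longrightarrow> is_mixed p \<alpha> \<beta> (madd p u v)"
  unfolding is_mixed_def madd_def by (simp add: vadd_range)

lemma is_mixed_msmul: "p > 0 \<Longrightarrow> is_mixed p \<alpha> \<beta> u \<Longrightarrow> is_mixed p \<alpha> \<beta> (msmul p c u)"
  unfolding is_mixed_def msmul_def by (simp add: vsmul_range)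

lemma is_mixed_mzero: "p > 0 \<Longrightarrow> is_mixed p \<alpha> \<beta> (mzero \<alpha> \<beta>)"
  unfolding is_mixed_def mzero_def by (simp add: replicate_zero_range)

lemma madd_assoc: "madd p (madd p u v) w = madd p u (madd p v w)"
  unfolding madd_def by (simp add: vadd_assoc)

lemma madd_comm: "madd p u v = madd p v u"
  unfolding madd_def by (metis vadd_comm)

lemma madd_mzero_left: "is_mixed p \<alpha> \<beta> u \<Longrightarrow> madd p (mzero \<alpha> \<beta>) u = u"
  unfolding madd_def mzero_def is_mixed_def by (simp add: vadd_zero_left)

lemma madd_mzero_right: "is_mixed p \<alpha> \<beta> u \<Longrightarrow> madd p u (mzero \<alpha> \<beta>) = u"
  using madd_mzero_left madd_comm by metis

lemma madd_neg_left: "is_mixed p \<alpha> \<beta> u \<Longrightarrow> madd p (msmul p (-1) u) u = mzero \<alpha> \<beta>"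
  unfolding madd_def mzero_def is_mixed_def msmul_def by (simp add: vadd_neg_left)

definition mixed_group :: "int \<Rightarrow> nat \<Rightarrow> nat \<Rightarrow> (int list \<times> int list) monoid" where
  "mixed_group p \<alpha> \<beta> = \<lparr>carrier = {u. is_mixed p \<alpha> \<beta> u}, mult = madd p, one = mzero \<alpha> \<beta>\<rparr>"

lemma mixed_group_simps [simp]:
  "carrier (mixed_group p \<alpha> \<beta>) = {u. is_mixed p \<alpha> \<beta> u}"
  "mult (mixed_group p \<alpha> \<beta>) = madd p"
  "one (mixed_group p \<alpha> \<beta>) = mzero \<alpha> \<beta>"
  by (simp_all add: mixed_group_def)

lemma comm_group_mixed_group: "p > 0 \<Longrightarrow> comm_group (mixed_group p \<alpha> \<beta>)"
proof (rule comm_groupI, goal_cases)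
  case (6 x)
  then show ?case
    using madd_neg_left[of p \<alpha> \<beta> x] is_mixed_msmul by (intro bexI[of _ "msmul p (-1) x"]) auto
qed (simp_all add: is_mixed_madd is_mixed_mzero madd_assoc madd_mzero_left, metis madd_comm)

lemma finite_mixed_group: "finite (carrier (mixed_group p \<alpha> \<beta>))"
proof -
  have "carrier (mixed_group p \<alpha> \<beta>) \<subseteq>
      {cs. length cs = \<alpha> \<and> set cs \<subseteq> {0..<p}} \<times> {cs. length cs = \<beta> \<and> set cs \<subseteq> {0..<p^2}}"
    by (auto simp: is_mixed_def)
  then show ?thesis
    by (rule finite_subset[OF _ finite_cartesian_product[OF finite_coeff_lists finite_coeff_lists]])
qed

lemma mixed_group_int_pow:
  assumes "p > 0" and u: "u \<in> carrier (mixed_group p \<alpha> \<beta>)" and "c \<ge> 0"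
  shows "u [^]\<^bsub>mixed_group p \<alpha> \<beta>\<^esub> c = msmul p c u"
proof -
  have "u [^]\<^bsub>mixed_group p \<alpha> \<beta>\<^esub> k = msmul p (int k) u" for k :: nat
    using u
    by (induction k)
      (auto simp: msmul_def madd_def mzero_def is_mixed_def prod_eq_iff mod_add_left_eq
        distrib_right add.commute mod_add_right_eq intro!: nth_equalityI)
  then show ?thesis
    using pow_nat[of c "mixed_group p \<alpha> \<beta>" u] \<open>c \<ge> 0\<close> by simp
qed

lemma mixed_group_inv:
  assumes "p > 0" and "u \<in> carrier (mixed_group p \<alpha> \<beta>)"
  shows "inv\<^bsub>mixed_group p \<alpha> \<beta>\<^esub> u = msmul p (-1) u"
  using assms comm_group.axioms(2)[OF comm_group_mixed_group[OF \<open>p > 0\<close>]]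
  by (intro group.inv_equality) (auto simp: madd_neg_left is_mixed_msmul)

lemma subgroup_if_additive_code:
  assumes "p > 0" and C: "additive_code p \<alpha> \<beta> C"
  shows "subgroup C (mixed_group p \<alpha> \<beta>)"
proof
  show carrier: "C \<subseteq> carrier (mixed_group p \<alpha> \<beta>)"
    using C unfolding additive_code_def by auto
  show "inv\<^bsub>mixed_group p \<alpha> \<beta>\<^esub> x \<in> C" if "x \<in> C" for x
  proof -
    have "inv\<^bsub>mixed_group p \<alpha> \<beta>\<^esub> x = msmul p (-1) x"
      using that carrier mixed_group_inv[OF \<open>p > 0\<close>] by blast
    then show ?thesis
      using that C unfolding additive_code_def by simp
  qed
qed (use C in \<open>simp_all add: additive_code_def\<close>)

lemma msum_mem:
  assumes "p > 0" and S: "subgroup S (mixed_group p \<alpha> \<beta>)" and "set xs \<subseteq> S"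
  shows "msum p \<alpha> \<beta> xs \<in> S"
  using comm_group.foldr_mult_closed[OF comm_group_mixed_group[OF \<open>p > 0\<close>] S \<open>set xs \<subseteq> S\<close>]
  unfolding msum_def by simp

lemma msum_map2_msmul_mem:
  assumes "p > 0" and S: "subgroup S (mixed_group p \<alpha> \<beta>)" and "set ws \<subseteq> S"
    and "\<forall>c\<in>set cs. c \<ge> 0"
  shows "msum p \<alpha> \<beta> (map2 (msmul p) cs ws) \<in> S"
proof (rule msum_mem[OF \<open>p > 0\<close> S], rule subsetI)
  interpret M: comm_group "mixed_group p \<alpha> \<beta>"
    using comm_group_mixed_group[OF \<open>p > 0\<close>] .
  fix y assume "y \<in> set (map2 (msmul p) cs ws)"
  then obtain c w where cw: "(c, w) \<in> set (zip cs ws)" and y: "y = msmul p c w"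
    by auto
  then have "c \<in> set cs" and "w \<in> S"
    using \<open>set ws \<subseteq> S\<close> by (auto dest: set_zip_leftD set_zip_rightD)
  moreover have "w \<in> carrier (mixed_group p \<alpha> \<beta>)"
    using \<open>w \<in> S\<close> subgroup.subset[OF S] by blast
  ultimately have "y = w [^]\<^bsub>mixed_group p \<alpha> \<beta>\<^esub> c"
    using mixed_group_int_pow[OF \<open>p > 0\<close>] assms(4) y by simp
  then show "y \<in> S"
    using M.subgroup_int_pow_closed[OF S \<open>w \<in> S\<close>] by simp
qed

lemma generator_combination_mem:
  assumes "p > 0" and S: "subgroup S (mixed_group p \<alpha> \<beta>)" and "set us \<subseteq> S" and "set vs \<subseteq> S"
    and "set (fst lc) \<subseteq> {0..<p}" and "set (snd lc) \<subseteq> {0..<p^2}"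
  shows "madd p (msum p \<alpha> \<beta> (map2 (msmul p) (fst lc) us))
                (msum p \<alpha> \<beta> (map2 (msmul p) (snd lc) vs)) \<in> S"
proof -
  have "\<forall>c\<in>set (fst lc). c \<ge> 0" and "\<forall>c\<in>set (snd lc). c \<ge> 0"
    using assms(5,6) by auto
  then show ?thesis
    using subgroup.m_closed[OF S msum_map2_msmul_mem[OF \<open>p > 0\<close> S assms(3)]
        msum_map2_msmul_mem[OF \<open>p > 0\<close> S assms(4)]]
    by simp
qed

lemma card_code:
  assumes "p > 0" and C: "additive_code p \<alpha> \<beta> C" and G: "generator_matrix p \<alpha> \<beta> C us vs"
  shows "card C = nat p ^ (length us + 2 * length vs)"
proof -
  define A1 where "A1 = {cs. length cs = length us \<and> set cs \<subseteq> {0..<p}}"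
  define A2 where "A2 = {cs. length cs = length vs \<and> set cs \<subseteq> {0..<p^2}}"
  define f where "f lc = madd p (msum p \<alpha> \<beta> (map2 (msmul p) (fst lc) us))
                   (msum p \<alpha> \<beta> (map2 (msmul p) (snd lc) vs))" for lc
  have unique: "\<forall>c\<in>C. \<exists>!lc. lc \<in> A1 \<times> A2 \<and> c = f lc"
    using G unfolding generator_matrix_def A1_def A2_def f_def by (simp add: mem_Times_iff conj_ac)
  have into: "f lc \<in> C" if "lc \<in> A1 \<times> A2" for lc
    using that G generator_combination_mem[OF \<open>p > 0\<close> subgroup_if_additive_code[OF \<open>p > 0\<close> C]]
    unfolding generator_matrix_def A1_def A2_def f_def by auto
  have "bij_betw f (A1 \<times> A2) C"
  proof (rule bij_betw_imageI)
    show "inj_on f (A1 \<times> A2)"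
    proof (rule inj_onI)
      fix a b assume "a \<in> A1 \<times> A2" "b \<in> A1 \<times> A2" "f a = f b"
      then show "a = b"
        using unique into[of a] by metis
    qed
    show "f ` (A1 \<times> A2) = C"
      using unique into by blast
  qed
  then have "card C = card A1 * card A2"
    using bij_betw_same_card card_cartesian_product by metis
  also have "\<dots> = nat p ^ length us * nat (p^2) ^ length vs"
    unfolding A1_def A2_def card_coeff_lists ..
  also have "\<dots> = nat p ^ (length us + 2 * length vs)"
    using \<open>p > 0\<close> by (simp add: nat_power_eq power_add power_mult)
  finally show ?thesis .
qed

section \<open>The Gray map\<close>

lemma phi_length [simp]: "length (phi p t) = nat p"
  by (simp add: phi_def)

lemma phi_nth: "j < nat p \<Longrightarrow> phi p t ! j = (t div p + t mod p * int j) mod p"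
  by (simp add: phi_def)

lemma phi_range: "p > 0 \<Longrightarrow> set (phi p t) \<subseteq> {0..<p}"
  by (auto simp: phi_def)

lemma phi_eqI: "length ys = nat p \<Longrightarrow> (\<And>j. j < nat p \<Longrightarrow> phi p t ! j = ys ! j) \<Longrightarrow> phi p t = ys"
  by (rule nth_equalityI) auto

lemma div_mod_square: "p > 0 \<Longrightarrow> (t mod p^2) div p = t div p mod (p::int)"
proof -
  assume "p > 0"
  then have "t mod (p * p) = p * (t div p mod p) + t mod p"
    by (simp add: zmod_zmult2_eq)
  then show ?thesis
    using \<open>p > 0\<close> by (simp add: power2_eq_square)
qed

lemma phi_mod_square: "p > 0 \<Longrightarrow> phi p (t mod p^2) = phi p t"
  by (rule phi_eqI) (simp_all add: phi_nth div_mod_square mod_mod_cancel mod_add_left_eq)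
text \<open>Adding \<open>p s\<close> changes only the digit \<open>\<theta>''\<close>, which adds the constant vector \<open>(s, \<dots>, s)\<close>.\<close>
lemma phi_add_p_multiple: "p > 0 \<Longrightarrow> phi p (t + p * s) = vadd p (phi p t) (phi p (p * s))"
proof (rule phi_eqI)
  fix j assume "p > 0" and j: "j < nat p"
  have "phi p (t + p * s) ! j = (t div p + s + t mod p * int j) mod p"
    using j \<open>p > 0\<close> by (simp add: phi_nth add_ac)
  also have "\<dots> = ((t div p + t mod p * int j) mod p + s mod p) mod p"
    by (simp only: mod_add_eq) (simp add: add_ac)
  also have "\<dots> = vadd p (phi p t) (phi p (p * s)) ! j"
    using j \<open>p > 0\<close> by (simp add: phi_nth)
  finally show "phi p (t + p * s) ! j = vadd p (phi p t) (phi p (p * s)) ! j" .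
qed simp

text \<open>The subtracted term is the carry produced by adding the digits \<open>\<theta>'\<close>.\<close>
lemma vadd_phi: "p > 0 \<Longrightarrow> vadd p (phi p a) (phi p b) = phi p (a + b - p * ((a mod p + b mod p) div p))"
proof (rule sym, rule phi_eqI)
  fix j assume "p > 0" and j: "j < nat p"
  define c where "c = (a mod p + b mod p) div p"
  define r where "r = (a mod p + b mod p) mod p"
  have "a mod p + b mod p = p * c + r" and "a = p * (a div p) + a mod p" and "b = p * (b div p) + b mod p"
    unfolding c_def r_def by simp_all
  then have "a + b - p * c = p * (a div p) + p * (b div p) + r"
    by linarith
  then have ab: "a + b - p * c = p * (a div p + b div p) + r"
    by (simp add: distrib_left)
  have r: "0 \<le> r" "r < p"
    using \<open>p > 0\<close> unfolding r_def by simp_all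
  have "phi p (a + b - p * c) ! j = (a div p + b div p + r * int j) mod p"
    using j r unfolding ab by (simp add: phi_nth)
  also have "\<dots> = (a div p + b div p + (a mod p + b mod p) * int j) mod p"
    unfolding r_def by (metis mod_add_right_eq mod_mult_left_eq)
  also have "\<dots> = ((a div p + a mod p * int j) mod p + (b div p + b mod p * int j) mod p) mod p"
    by (simp add: algebra_simps mod_add_eq)
  also have "\<dots> = vadd p (phi p a) (phi p b) ! j"
    using j \<open>p > 0\<close> by (simp add: phi_nth)
  finally show "phi p (a + b - p * ((a mod p + b mod p) div p)) ! j = vadd p (phi p a) (phi p b) ! j"
    unfolding c_def .
qed simp

lemma phi_inj_on: "p > 1 \<Longrightarrow> inj_on (phi p) {0..<p^2}"
proof (rule inj_onI)
  fix a b assume "p > 1" and a: "a \<in> {0..<p^2}" and b: "b \<in> {0..<p^2}" and eq: "phi p a = phi p b"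
  have "phi p a ! 0 = phi p b ! 0" and "phi p a ! 1 = phi p b ! 1"
    using eq by simp_all
  then have digit0: "a div p mod p = b div p mod p"
    and digit1: "(a div p + a mod p) mod p = (b div p + b mod p) mod p"
    using \<open>p > 1\<close> by (simp_all add: phi_nth)
  have "a div p = b div p"
    using digit0 div_mod_square[of p a] div_mod_square[of p b] a b \<open>p > 1\<close> by simp
  moreover have "a mod p = b mod p"
  proof -
    have "a mod p = ((a div p + a mod p) mod p - a div p) mod p"
      by (simp add: mod_diff_left_eq)
    also have "\<dots> = ((b div p + b mod p) mod p - b div p) mod p"
      using digit1 \<open>a div p = b div p\<close> by simp
    also have "\<dots> = b mod p"
      by (simp add: mod_diff_left_eq)
    finally show ?thesis .
  qed
  ultimately show "a = b"
    by (metis mult_div_mod_eq)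
qed

lemma concat_map_phi_map2:
  assumes "length xs = length ys"
    and "\<forall>i<length xs. phi p (f (xs ! i) (ys ! i)) = vadd p (phi p (xs ! i)) (phi p (ys ! i))"
  shows "concat (map (phi p) (map2 f xs ys)) = vadd p (concat (map (phi p) xs)) (concat (map (phi p) ys))"
  using assms
proof (induction xs ys rule: list_induct2)
  case Nil
  then show ?case by (simp add: vadd_def)
next
  case (Cons x xs y ys)
  then have "phi p (f x y) = vadd p (phi p x) (phi p y)"
    and "concat (map (phi p) (map2 f xs ys)) = vadd p (concat (map (phi p) xs)) (concat (map (phi p) ys))"
    by force+
  then show ?case
    by (simp add: vadd_append)
qed

lemma length_concat_map_phi: "length (concat (map (phi p) xs)) = length xs * nat p"
  by (induction xs) auto

lemma Phi_length: "is_mixed p \<alpha> \<beta> u \<Longrightarrow> length (Phi p u) = \<alpha> + nat p * \<beta>"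
  unfolding Phi_def is_mixed_def by (simp add: length_concat_map_phi)

lemma Phi_mem_vec_group: "p > 0 \<Longrightarrow> is_mixed p \<alpha> \<beta> u \<Longrightarrow> Phi p u \<in> carrier (vec_group p (\<alpha> + nat p * \<beta>))"
  using Phi_length phi_range unfolding Phi_def is_mixed_def by fastforce

lemma concat_eq_imp_map_eq:
  assumes "length xs = length ys" and "\<And>x. length (f x) = k"
    and "concat (map f xs) = concat (map f ys)"
  shows "map f xs = map f ys"
  using assms(1,3) by (induction xs ys rule: list_induct2) (auto simp: assms(2) append_eq_append_conv)

lemma Phi_inj_on: "p > 1 \<Longrightarrow> inj_on (Phi p) {u. is_mixed p \<alpha> \<beta> u}"
proof (rule inj_onI)
  fix u v assume "p > 1" and "u \<in> {u. is_mixed p \<alpha> \<beta> u}" "v \<in> {u. is_mixed p \<alpha> \<beta> u}"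
    and eq: "Phi p u = Phi p v"
  then have len: "length (fst u) = length (fst v)" "length (snd u) = length (snd v)"
    and range: "set (snd u) \<union> set (snd v) \<subseteq> {0..<p^2}"
    by (simp_all add: is_mixed_def)
  then have "fst u = fst v" and "concat (map (phi p) (snd u)) = concat (map (phi p) (snd v))"
    using eq unfolding Phi_def by (simp_all add: append_eq_append_conv)
  moreover from this(2) have "map (phi p) (snd u) = map (phi p) (snd v)"
    using concat_eq_imp_map_eq[where f="phi p", OF len(2) phi_length] by blast
  then have "snd u = snd v"
    using inj_on_map_eq_map[OF inj_on_subset[OF phi_inj_on[OF \<open>p > 1\<close>] range]] by blast
  ultimately show "u = v"
    by (simp add: prod_eq_iff)
qed

lemma Phi_mzero: "Phi p (mzero \<alpha> \<beta>) = replicate (\<alpha> + nat p * \<beta>) 0"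
proof -
  have "phi p 0 = replicate (nat p) 0"
    by (rule phi_eqI) (simp_all add: phi_nth)
  moreover have "concat (replicate n (replicate k (0::int))) = replicate (n * k) 0" for n k
    by (induction n) (simp_all add: replicate_add)
  ultimately show ?thesis
    unfolding Phi_def mzero_def by (simp add: replicate_add mult.commute)
qed

definition p_divisible :: "int \<Rightarrow> int list \<times> int list \<Rightarrow> bool" where
  "p_divisible p z \<longleftrightarrow> (\<forall>e\<in>set (snd z). p dvd e)"

lemma p_divisible_msmul: "p_divisible p z \<Longrightarrow> p_divisible p (msmul p c z)"
  unfolding p_divisible_def msmul_def vsmul_def
  by (auto intro!: dvd_mod simp: power2_eq_square)

lemma p_divisible_msmul_p: "p_divisible p (msmul p p z)"
  unfolding p_divisible_def msmul_def vsmul_def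
  by (auto intro!: dvd_mod simp: power2_eq_square)

lemma p_divisible_if_order_p:
  assumes "p > 0" and "is_mixed p \<alpha> \<beta> u" and "msmul p p u = mzero \<alpha> \<beta>"
  shows "p_divisible p u"
  unfolding p_divisible_def
proof
  fix e assume "e \<in> set (snd u)"
  then obtain i where i: "i < length (snd u)" "e = snd u ! i"
    by (auto simp: in_set_conv_nth)
  have "vsmul (p^2) p (snd u) ! i = 0"
    using assms(2,3) i unfolding msmul_def mzero_def is_mixed_def by simp
  then have "p * p dvd p * e"
    using i by (simp add: power2_eq_square mod_eq_0_iff_dvd)
  then show "p dvd e"
    using \<open>p > 0\<close> by simp
qed

lemma Phi_madd_p_divisible:
  assumes "p > 0" and x: "is_mixed p \<alpha> \<beta> x" and z: "is_mixed p \<alpha> \<beta> z" and "p_divisible p z"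
  shows "Phi p (madd p x z) = vadd p (Phi p x) (Phi p z)"
proof -
  have len: "length (fst x) = length (fst z)" "length (snd x) = length (snd z)"
    using x z by (simp_all add: is_mixed_def)
  have "phi p ((snd x ! i + snd z ! i) mod p^2) = vadd p (phi p (snd x ! i)) (phi p (snd z ! i))"
    if "i < length (snd x)" for i
  proof -
    have "p dvd snd z ! i"
      using \<open>p_divisible p z\<close> that len(2) nth_mem unfolding p_divisible_def by auto
    then obtain s where "snd z ! i = p * s" ..
    then show ?thesis
      using \<open>p > 0\<close> by (simp add: phi_mod_square phi_add_p_multiple)
  qed
  then have "concat (map (phi p) (map2 (\<lambda>a b. (a + b) mod p^2) (snd x) (snd z)))
      = vadd p (concat (map (phi p) (snd x))) (concat (map (phi p) (snd z)))"
    by (intro concat_map_phi_map2[OF len(2)]) blast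
  then show ?thesis
    unfolding Phi_def madd_def
    by (simp add: vadd_append len(1) length_concat_map_phi) (simp add: vadd_def)
qed

lemma vadd_Phi_eq_Phi_madd_carry:
  assumes "p > 0" and x: "is_mixed p \<alpha> \<beta> x" and y: "is_mixed p \<alpha> \<beta> y"
  obtains z where "is_mixed p \<alpha> \<beta> z" and "p_divisible p z"
    and "vadd p (Phi p x) (Phi p y) = Phi p (madd p (madd p x y) z)"
proof -
  define carry where "carry a b = p * ((a mod p + b mod p) div p)" for a b
  define z where "z = (replicate \<alpha> (0::int), map2 (\<lambda>a b. (- carry a b) mod p^2) (snd x) (snd y))"
  have len: "length (fst x) = \<alpha>" "length (fst y) = \<alpha>" "length (snd x) = \<beta>" "length (snd y) = \<beta>"
    using x y by (simp_all add: is_mixed_def)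
  have "is_mixed p \<alpha> \<beta> z"
    unfolding z_def is_mixed_def using \<open>p > 0\<close> len
    by (auto simp: set_subset_conv_nth replicate_zero_range)
  moreover have "p_divisible p z"
    unfolding p_divisible_def z_def carry_def using len
    by (auto simp: in_set_conv_nth power2_eq_square intro!: dvd_mod)
  moreover have "vadd p (Phi p x) (Phi p y) = Phi p (madd p (madd p x y) z)"
  proof -
    have snd_sum: "vadd (p^2) (vadd (p^2) (snd x) (snd y)) (snd z)
        = map2 (\<lambda>a b. (a + b - carry a b) mod p^2) (snd x) (snd y)"
    proof (rule nth_equalityI)
      fix i assume "i < length (vadd (p^2) (vadd (p^2) (snd x) (snd y)) (snd z))"
      then have "i < \<beta>"
        by (simp add: z_def len)
      have "((snd x ! i + snd y ! i) mod p^2 + (- carry (snd x ! i) (snd y ! i)) mod p^2) mod p^2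
          = (snd x ! i + snd y ! i - carry (snd x ! i) (snd y ! i)) mod p^2"
        by (simp add: mod_add_eq)
      then show "vadd (p^2) (vadd (p^2) (snd x) (snd y)) (snd z) ! i
          = map2 (\<lambda>a b. (a + b - carry a b) mod p^2) (snd x) (snd y) ! i"
        using \<open>i < \<beta>\<close> by (simp add: z_def len)
    qed (simp add: z_def len)
    have "concat (map (phi p) (map2 (\<lambda>a b. (a + b - carry a b) mod p^2) (snd x) (snd y)))
        = vadd p (concat (map (phi p) (snd x))) (concat (map (phi p) (snd y)))"
      by (rule concat_map_phi_map2) (simp_all add: len \<open>p > 0\<close> phi_mod_square vadd_phi carry_def)
    moreover have "vadd p (vadd p (fst x) (fst y)) (fst z) = vadd p (fst x) (fst y)"
      unfolding z_def using vadd_zero_right len \<open>p > 0\<close> vadd_range by simp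
    ultimately show ?thesis
      unfolding Phi_def madd_def using snd_sum
      by (simp add: vadd_append len length_concat_map_phi)
  qed
  ultimately show ?thesis
    using that by blast
qed

section \<open>The kernel of the Gray image\<close>

lemma Phi_image_subset_carrier:
  assumes "p > 0" and "additive_code p \<alpha> \<beta> C"
  shows "Phi p ` C \<subseteq> carrier (vec_group p (\<alpha> + nat p * \<beta>))"
  using assms Phi_mem_vec_group unfolding additive_code_def by blast

lemma zero_mem_Phi_image:
  assumes "additive_code p \<alpha> \<beta> C"
  shows "replicate (\<alpha> + nat p * \<beta>) 0 \<in> Phi p ` C"
  using assms Phi_mzero[of p \<alpha> \<beta>] unfolding additive_code_def by (metis image_eqI)

lemma Phi_mem_kernel_if_p_divisible:
  assumes "p > 0" and C: "additive_code p \<alpha> \<beta> C" and "z \<in> C" and "p_divisible p z"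
  shows "Phi p z \<in> kernel p (\<alpha> + nat p * \<beta>) (Phi p ` C)"
proof -
  have sub: "subgroup C (mixed_group p \<alpha> \<beta>)"
    using subgroup_if_additive_code[OF \<open>p > 0\<close> C] .
  have mixed: "is_mixed p \<alpha> \<beta> x" if "x \<in> C" for x
    using that C unfolding additive_code_def by blast
  have translate: "vadd p (Phi p x) (Phi p z) = Phi p (madd p x z)" if "x \<in> C" for x
    using Phi_madd_p_divisible[OF \<open>p > 0\<close> mixed[OF that] mixed[OF \<open>z \<in> C\<close>] \<open>p_divisible p z\<close>] ..
  have "(\<lambda>c. vadd p c (Phi p z)) ` Phi p ` C = Phi p ` C"
  proof (intro equalityI subsetI)
    fix y assume "y \<in> (\<lambda>c. vadd p c (Phi p z)) ` Phi p ` C"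
    then obtain x where "x \<in> C" and "y = Phi p (madd p x z)"
      using translate by auto
    then show "y \<in> Phi p ` C"
      using subgroup.m_closed[OF sub _ \<open>z \<in> C\<close>] by auto
  next
    fix y assume "y \<in> Phi p ` C"
    then obtain x where x: "x \<in> C" and y: "y = Phi p x" by blast
    define x' where "x' = madd p x (msmul p (-1) z)"
    have "msmul p (-1) z \<in> C"
      using C \<open>z \<in> C\<close> unfolding additive_code_def by blast
    then have "x' \<in> C"
      using subgroup.m_closed[OF sub x] unfolding x'_def by simp
    moreover have "madd p x' z = x"
      unfolding x'_def using madd_neg_left[OF mixed[OF \<open>z \<in> C\<close>]] madd_mzero_right[OF mixed[OF x]]
      by (simp add: madd_assoc)
    ultimately show "y \<in> (\<lambda>c. vadd p c (Phi p z)) ` Phi p ` C"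
      using translate y by (metis image_eqI)
  qed
  then show ?thesis
    unfolding Defs.kernel_def using Phi_mem_vec_group[OF \<open>p > 0\<close> mixed[OF \<open>z \<in> C\<close>]] by simp
qed

lemma mem_code_if_Phi_mem_image:
  assumes "p > 1" and C: "additive_code p \<alpha> \<beta> C" and "is_mixed p \<alpha> \<beta> u" and "Phi p u \<in> Phi p ` C"
  shows "u \<in> C"
proof -
  obtain c where "c \<in> C" and "Phi p u = Phi p c"
    using \<open>Phi p u \<in> Phi p ` C\<close> by blast
  moreover have "is_mixed p \<alpha> \<beta> c"
    using \<open>c \<in> C\<close> C unfolding additive_code_def by blast
  ultimately have "u = c"
    using inj_onD[OF Phi_inj_on[OF \<open>p > 1\<close>] \<open>Phi p u = Phi p c\<close>] \<open>is_mixed p \<alpha> \<beta> u\<close> by simp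
  then show ?thesis
    using \<open>c \<in> C\<close> by simp
qed

text \<open>As \<open>\<Phi>(k)\<close> lies in the kernel, \<open>\<Phi>(k + s + z) = \<Phi>(k) + \<Phi>(s)\<close> lies in \<open>\<Phi>(C)\<close>, so \<open>k + s + z \<in> C\<close>
  by injectivity of \<open>\<Phi>\<close>.\<close>
lemma carry_mem_code:
  assumes "p > 1" and C: "additive_code p \<alpha> \<beta> C" and "k \<in> C"
    and k: "Phi p k \<in> kernel p (\<alpha> + nat p * \<beta>) (Phi p ` C)" and "s \<in> C" and z: "is_mixed p \<alpha> \<beta> z"
    and carry: "vadd p (Phi p k) (Phi p s) = Phi p (madd p (madd p k s) z)"
  shows "z \<in> C"
proof -
  let ?M = "mixed_group p \<alpha> \<beta>"
  have "p > 0" using \<open>p > 1\<close> by simp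
  interpret M: comm_group ?M
    using comm_group_mixed_group[OF \<open>p > 0\<close>] .
  have sub: "subgroup C ?M"
    using subgroup_if_additive_code[OF \<open>p > 0\<close> C] .
  have ks: "madd p k s \<in> C" and "is_mixed p \<alpha> \<beta> (madd p k s)"
    using subgroup.m_closed[OF sub \<open>k \<in> C\<close> \<open>s \<in> C\<close>] subgroup.subset[OF sub] by auto
  have "vadd p (Phi p s) (Phi p k) \<in> Phi p ` C"
    using kernel_translate_mem[OF k] \<open>s \<in> C\<close> by blast
  then have c: "madd p (madd p k s) z \<in> C"
    using mem_code_if_Phi_mem_image[OF \<open>p > 1\<close> C is_mixed_madd[OF \<open>p > 0\<close> \<open>is_mixed p \<alpha> \<beta> (madd p k s)\<close> z]]
      carry vadd_comm[of p "Phi p s"] by simp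
  have "z = inv\<^bsub>?M\<^esub> (madd p k s) \<otimes>\<^bsub>?M\<^esub> madd p (madd p k s) z"
    using M.inv_solve_left[of z "madd p k s" "madd p (madd p k s) z"] \<open>is_mixed p \<alpha> \<beta> (madd p k s)\<close> z
      is_mixed_madd[OF \<open>p > 0\<close> \<open>is_mixed p \<alpha> \<beta> (madd p k s)\<close> z] by simp
  then show ?thesis
    using subgroup.m_closed[OF sub subgroup.m_inv_closed[OF sub ks] c] by simp
qed

text \<open>Removing the carry \<open>z\<close> from \<open>\<Phi>(k) + \<Phi>(s) = \<Phi>(k + s + z)\<close> costs only the kernel vector \<open>\<Phi>(-z)\<close>.\<close>
lemma Phi_madd_kernel:
  assumes "p > 1" and C: "additive_code p \<alpha> \<beta> C" and "k \<in> C"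
    and k: "Phi p k \<in> kernel p (\<alpha> + nat p * \<beta>) (Phi p ` C)" and "s \<in> C"
  obtains k' where "k' \<in> kernel p (\<alpha> + nat p * \<beta>) (Phi p ` C)"
    and "Phi p (madd p k s) = vadd p k' (Phi p s)"
proof -
  let ?K = "kernel p (\<alpha> + nat p * \<beta>) (Phi p ` C)"
  have "p > 0" using \<open>p > 1\<close> by simp
  have mixed: "is_mixed p \<alpha> \<beta> x" if "x \<in> C" for x
    using that C unfolding additive_code_def by blast
  have ks: "is_mixed p \<alpha> \<beta> (madd p k s)"
    using is_mixed_madd[OF \<open>p > 0\<close> mixed mixed] \<open>k \<in> C\<close> \<open>s \<in> C\<close> .
  obtain z where z: "is_mixed p \<alpha> \<beta> z" "p_divisible p z"
    and carry: "vadd p (Phi p k) (Phi p s) = Phi p (madd p (madd p k s) z)"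
    using vadd_Phi_eq_Phi_madd_carry[OF \<open>p > 0\<close> mixed[OF \<open>k \<in> C\<close>] mixed[OF \<open>s \<in> C\<close>]] .
  define z' where "z' = msmul p (-1) z"
  have "z \<in> C"
    using carry_mem_code[OF assms z(1) carry] .
  then have "z' \<in> C" and "p_divisible p z'"
    using C p_divisible_msmul[OF z(2)] unfolding additive_code_def z'_def by auto
  then have z'K: "Phi p z' \<in> ?K"
    using Phi_mem_kernel_if_p_divisible[OF \<open>p > 0\<close> C] by blast
  have "madd p (madd p (madd p k s) z) z' = madd p k s"
    unfolding z'_def using madd_neg_left[OF z(1)] madd_mzero_right[OF ks]
    by (simp add: madd_assoc madd_comm[of p "msmul p (-1) z" z])
  then have "Phi p (madd p k s) = vadd p (Phi p (madd p (madd p k s) z)) (Phi p z')"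
    using Phi_madd_p_divisible[OF \<open>p > 0\<close> _ mixed[OF \<open>z' \<in> C\<close>] \<open>p_divisible p z'\<close>]
      is_mixed_madd[OF \<open>p > 0\<close> ks z(1)] by metis
  also have "\<dots> = vadd p (vadd p (Phi p k) (Phi p z')) (Phi p s)"
    unfolding carry[symmetric] by (simp add: vadd_assoc vadd_comm[of p "Phi p s"])
  finally show ?thesis
    using that subgroup_kernel[OF \<open>p > 0\<close> Phi_image_subset_carrier[OF \<open>p > 0\<close> C]] k z'K
    by (metis mem_Collect_eq subgroup.m_closed vec_group_simps(2))
qed

definition kernel_preimage :: "int \<Rightarrow> nat \<Rightarrow> nat \<Rightarrow> (int list \<times> int list) set \<Rightarrow> (int list \<times> int list) set" where
  "kernel_preimage p \<alpha> \<beta> C = {c \<in> C. Phi p c \<in> kernel p (\<alpha> + nat p * \<beta>) (Phi p ` C)}"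

lemma Phi_kernel_preimage:
  assumes "p > 0" and "additive_code p \<alpha> \<beta> C"
  shows "Phi p ` kernel_preimage p \<alpha> \<beta> C = kernel p (\<alpha> + nat p * \<beta>) (Phi p ` C)"
proof
  show "Phi p ` kernel_preimage p \<alpha> \<beta> C \<subseteq> kernel p (\<alpha> + nat p * \<beta>) (Phi p ` C)"
    unfolding kernel_preimage_def by blast
  show "kernel p (\<alpha> + nat p * \<beta>) (Phi p ` C) \<subseteq> Phi p ` kernel_preimage p \<alpha> \<beta> C"
  proof
    fix k assume k: "k \<in> kernel p (\<alpha> + nat p * \<beta>) (Phi p ` C)"
    then obtain c where "c \<in> C" and "k = Phi p c"
      using kernel_subset[OF Phi_image_subset_carrier[OF assms] zero_mem_Phi_image[OF assms(2)]]
      by blast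
    then show "k \<in> Phi p ` kernel_preimage p \<alpha> \<beta> C"
      using k unfolding kernel_preimage_def by blast
  qed
qed

lemma card_kernel_preimage:
  assumes "p > 1" and C: "additive_code p \<alpha> \<beta> C"
  shows "card (kernel_preimage p \<alpha> \<beta> C) = card (kernel p (\<alpha> + nat p * \<beta>) (Phi p ` C))"
proof -
  have "kernel_preimage p \<alpha> \<beta> C \<subseteq> {u. is_mixed p \<alpha> \<beta> u}"
    using C unfolding kernel_preimage_def additive_code_def by blast
  then have "inj_on (Phi p) (kernel_preimage p \<alpha> \<beta> C)"
    by (rule inj_on_subset[OF Phi_inj_on[OF \<open>p > 1\<close>]])
  then show ?thesis
    using card_image Phi_kernel_preimage[OF _ C] \<open>p > 1\<close> by (metis zero_less_one order.strict_trans)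
qed

lemma p_divisible_mem_kernel_preimage:
  assumes "p > 0" and "additive_code p \<alpha> \<beta> C" and "z \<in> C" and "p_divisible p z"
  shows "z \<in> kernel_preimage p \<alpha> \<beta> C"
  using Phi_mem_kernel_if_p_divisible[OF assms] \<open>z \<in> C\<close> unfolding kernel_preimage_def by blast

lemma madd_mem_kernel_preimage:
  assumes "p > 1" and C: "additive_code p \<alpha> \<beta> C"
    and x: "x \<in> kernel_preimage p \<alpha> \<beta> C" and y: "y \<in> kernel_preimage p \<alpha> \<beta> C"
  shows "madd p x y \<in> kernel_preimage p \<alpha> \<beta> C"
proof -
  have "p > 0" using \<open>p > 1\<close> by simp
  obtain k' where "k' \<in> kernel p (\<alpha> + nat p * \<beta>) (Phi p ` C)" and "Phi p (madd p x y) = vadd p k' (Phi p y)"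
    using Phi_madd_kernel[OF \<open>p > 1\<close> C] x y unfolding kernel_preimage_def by blast
  then have "Phi p (madd p x y) \<in> kernel p (\<alpha> + nat p * \<beta>) (Phi p ` C)"
    using subgroup.m_closed[OF subgroup_kernel[OF \<open>p > 0\<close> Phi_image_subset_carrier[OF \<open>p > 0\<close> C]]] y
    unfolding kernel_preimage_def by simp
  moreover have "madd p x y \<in> C"
    using C x y unfolding additive_code_def kernel_preimage_def by blast
  ultimately show ?thesis
    unfolding kernel_preimage_def by blast
qed

lemma neg_mem_kernel_preimage:
  assumes "p > 1" and C: "additive_code p \<alpha> \<beta> C" and x: "x \<in> kernel_preimage p \<alpha> \<beta> C"
  shows "msmul p (-1) x \<in> kernel_preimage p \<alpha> \<beta> C"
proof -
  let ?K = "kernel p (\<alpha> + nat p * \<beta>) (Phi p ` C)"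
  define x' where "x' = msmul p (-1) x"
  have "p > 0" using \<open>p > 1\<close> by simp
  have "x \<in> C" and "x' \<in> C" and mixed: "is_mixed p \<alpha> \<beta> x"
    using C x unfolding additive_code_def kernel_preimage_def x'_def by auto
  then obtain k' where "k' \<in> ?K" and "Phi p (madd p x x') = vadd p k' (Phi p x')"
    using Phi_madd_kernel[OF \<open>p > 1\<close> C] x unfolding kernel_preimage_def by blast
  moreover have "madd p x x' = mzero \<alpha> \<beta>"
    using madd_neg_left[OF mixed] madd_comm unfolding x'_def by metis
  ultimately have sum: "vadd p k' (Phi p x') = replicate (\<alpha> + nat p * \<beta>) 0"
    by (simp add: Phi_mzero)
  have "length k' = \<alpha> + nat p * \<beta>"
    using \<open>k' \<in> ?K\<close> kernel_subset_carrier by fastforce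
  moreover have "Phi p x' \<in> carrier (vec_group p (\<alpha> + nat p * \<beta>))"
    using Phi_image_subset_carrier[OF \<open>p > 0\<close> C] \<open>x' \<in> C\<close> by blast
  ultimately have "Phi p x' = vadd p (vadd p (vsmul p (-1) k') k') (Phi p x')"
    by (simp add: vadd_neg_left vadd_zero_left)
  also have "\<dots> = vsmul p (-1) k'"
    using sum vsmul_range[OF \<open>p > 0\<close>] \<open>length k' = _\<close> by (simp add: vadd_assoc vadd_zero_right)
  also have "\<dots> = inv\<^bsub>vec_group p (\<alpha> + nat p * \<beta>)\<^esub> k'"
    using vec_group_inv[OF \<open>p > 0\<close>, symmetric] kernel_subset_carrier \<open>k' \<in> ?K\<close> by blast
  also have "\<dots> \<in> ?K"
    using subgroup.m_inv_closed[OF subgroup_kernel[OF \<open>p > 0\<close> Phi_image_subset_carrier[OF \<open>p > 0\<close> C]]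
        \<open>k' \<in> ?K\<close>] .
  finally show ?thesis
    using \<open>x' \<in> C\<close> unfolding kernel_preimage_def x'_def by blast
qed

lemma subgroup_kernel_preimage:
  assumes "p > 1" and C: "additive_code p \<alpha> \<beta> C"
  shows "subgroup (kernel_preimage p \<alpha> \<beta> C) (mixed_group p \<alpha> \<beta>)"
proof
  have "p > 0" using \<open>p > 1\<close> by simp
  show carrier: "kernel_preimage p \<alpha> \<beta> C \<subseteq> carrier (mixed_group p \<alpha> \<beta>)"
    using C unfolding additive_code_def kernel_preimage_def by auto
  show "\<one>\<^bsub>mixed_group p \<alpha> \<beta>\<^esub> \<in> kernel_preimage p \<alpha> \<beta> C"
    using p_divisible_mem_kernel_preimage[OF \<open>p > 0\<close> C] C
    by (simp add: additive_code_def p_divisible_def mzero_def)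
  show "x \<otimes>\<^bsub>mixed_group p \<alpha> \<beta>\<^esub> y \<in> kernel_preimage p \<alpha> \<beta> C"
    if "x \<in> kernel_preimage p \<alpha> \<beta> C" and "y \<in> kernel_preimage p \<alpha> \<beta> C" for x y
    using madd_mem_kernel_preimage[OF assms that] by simp
  show "inv\<^bsub>mixed_group p \<alpha> \<beta>\<^esub> x \<in> kernel_preimage p \<alpha> \<beta> C"
    if "x \<in> kernel_preimage p \<alpha> \<beta> C" for x
  proof -
    have "x \<in> carrier (mixed_group p \<alpha> \<beta>)"
      using carrier that by blast
    then show ?thesis
      using neg_mem_kernel_preimage[OF assms that] mixed_group_inv[OF \<open>p > 0\<close>] by simp
  qed
qed

lemma pow_mem_kernel_preimage:
  assumes "p > 0" and C: "additive_code p \<alpha> \<beta> C" and "x \<in> C"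
  shows "x [^]\<^bsub>mixed_group p \<alpha> \<beta>\<^esub> p \<in> kernel_preimage p \<alpha> \<beta> C"
proof -
  have sub: "subgroup C (mixed_group p \<alpha> \<beta>)"
    using subgroup_if_additive_code[OF \<open>p > 0\<close> C] .
  have "x \<in> carrier (mixed_group p \<alpha> \<beta>)"
    using subgroup.subset[OF sub] \<open>x \<in> C\<close> by blast
  then have "x [^]\<^bsub>mixed_group p \<alpha> \<beta>\<^esub> p = msmul p p x"
    using mixed_group_int_pow[OF \<open>p > 0\<close>] \<open>p > 0\<close> by simp
  moreover have "x [^]\<^bsub>mixed_group p \<alpha> \<beta>\<^esub> p \<in> C"
    using group.subgroup_int_pow_closed[OF comm_group.axioms(2)[OF comm_group_mixed_group[OF \<open>p > 0\<close>]]
        sub \<open>x \<in> C\<close>] .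
  ultimately show ?thesis
    using p_divisible_mem_kernel_preimage[OF \<open>p > 0\<close> C] p_divisible_msmul_p by metis
qed

text \<open>The rows of order \<open>p\<close> lie in the kernel preimage, so it generates \<open>C\<close> together with the
  rows of order \<open>p\<^sup>2\<close>.\<close>
lemma code_eq_generate:
  assumes "p > 0" and C: "additive_code p \<alpha> \<beta> C" and G: "generator_matrix p \<alpha> \<beta> C us vs"
  shows "C = generate (mixed_group p \<alpha> \<beta>) (kernel_preimage p \<alpha> \<beta> C \<union> set vs)"
proof (rule group.generateI[OF comm_group.axioms(2)[OF comm_group_mixed_group[OF \<open>p > 0\<close>]]])
  show "subgroup C (mixed_group p \<alpha> \<beta>)"
    using subgroup_if_additive_code[OF \<open>p > 0\<close> C] .
  show "kernel_preimage p \<alpha> \<beta> C \<union> set vs \<subseteq> C"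
    using G unfolding kernel_preimage_def generator_matrix_def by blast
  have us: "set us \<subseteq> kernel_preimage p \<alpha> \<beta> C"
  proof
    fix u assume "u \<in> set us"
    then have "u \<in> C" and "msmul p p u = mzero \<alpha> \<beta>"
      using G unfolding generator_matrix_def by auto
    then show "u \<in> kernel_preimage p \<alpha> \<beta> C"
      using p_divisible_mem_kernel_preimage[OF \<open>p > 0\<close> C] p_divisible_if_order_p[OF \<open>p > 0\<close>] C
      unfolding additive_code_def by blast
  qed
  fix S assume S: "subgroup S (mixed_group p \<alpha> \<beta>)" and HS: "kernel_preimage p \<alpha> \<beta> C \<union> set vs \<subseteq> S"
  then have "set us \<subseteq> S" and "set vs \<subseteq> S"
    using us by auto
  show "C \<subseteq> S"
  proof
    fix c assume "c \<in> C"
    then obtain lc where "set (fst lc) \<subseteq> {0..<p}" and "set (snd lc) \<subseteq> {0..<p^2}"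
      and "c = madd p (msum p \<alpha> \<beta> (map2 (msmul p) (fst lc) us)) (msum p \<alpha> \<beta> (map2 (msmul p) (snd lc) vs))"
      using G unfolding generator_matrix_def by blast
    then show "c \<in> S"
      using generator_combination_mem[OF \<open>p > 0\<close> S \<open>set us \<subseteq> S\<close> \<open>set vs \<subseteq> S\<close>] by simp
  qed
qed

lemma pow_prod_mixed_group:
  assumes "p > 0" and gs: "set gs \<subseteq> carrier (mixed_group p \<alpha> \<beta>)" and ix: "set ix \<subseteq> {..<length gs}"
    and a: "\<forall>j<length ix. a j \<ge> 0"
  shows "pow_prod (mixed_group p \<alpha> \<beta>) gs ix a
    = msum p \<alpha> \<beta> (map (\<lambda>j. msmul p (a j) (gs ! (ix ! j))) [0..<length ix])"
proof -
  have factors: "map (\<lambda>j. gs ! (ix ! j) [^]\<^bsub>mixed_group p \<alpha> \<beta>\<^esub> a j) [0..<length ix]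
      = map (\<lambda>j. msmul p (a j) (gs ! (ix ! j))) [0..<length ix]"
  proof (rule map_cong[OF refl])
    fix j assume "j \<in> set [0..<length ix]"
    then have "gs ! (ix ! j) \<in> carrier (mixed_group p \<alpha> \<beta>)" and "a j \<ge> 0"
      using gs nth_nth_mem[OF ix] a by auto
    then show "gs ! (ix ! j) [^]\<^bsub>mixed_group p \<alpha> \<beta>\<^esub> a j = msmul p (a j) (gs ! (ix ! j))"
      by (rule mixed_group_int_pow[OF \<open>p > 0\<close>])
  qed
  show ?thesis
    unfolding pow_prod_def msum_def mixed_group_simps factors ..
qed

lemma Phi_image_eq_kernel_cosets:
  assumes "p > 1" and C: "additive_code p \<alpha> \<beta> C" and "set vs \<subseteq> C" and ix: "set ix \<subseteq> {..<length vs}"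
    and span: "span_mod (mixed_group p \<alpha> \<beta>) (kernel_preimage p \<alpha> \<beta> C) p vs ix = C"
  shows "Phi p ` C = {w. \<exists>a. (\<forall>i<length ix. a i \<in> {0..<p}) \<and>
           (\<exists>k\<in>kernel p (\<alpha> + nat p * \<beta>) (Phi p ` C).
              w = vadd p k (Phi p (msum p \<alpha> \<beta> (map (\<lambda>i. msmul p (a i) (vs ! (ix ! i))) [0..<length ix]))))}"
    (is "_ = ?cosets")
proof -
  let ?M = "mixed_group p \<alpha> \<beta>"
  let ?K = "kernel p (\<alpha> + nat p * \<beta>) (Phi p ` C)"
  have "p > 0" using \<open>p > 1\<close> by simp
  have sub: "subgroup C ?M"
    using subgroup_if_additive_code[OF \<open>p > 0\<close> C] .
  have vs: "set vs \<subseteq> carrier ?M"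
    using \<open>set vs \<subseteq> C\<close> subgroup.subset[OF sub] by blast
  define s where "s a = msum p \<alpha> \<beta> (map (\<lambda>i. msmul p (a i) (vs ! (ix ! i))) [0..<length ix])" for a
  have s: "s a = pow_prod ?M vs ix a" if "\<forall>i<length ix. a i \<in> {0..<p}" for a
    using that pow_prod_mixed_group[OF \<open>p > 0\<close> vs ix, of a] unfolding s_def by auto
  have "pow_prod ?M vs ix a \<in> C" for a
    using comm_group.pow_prod_mem[OF comm_group_mixed_group[OF \<open>p > 0\<close>] sub]
      \<open>set vs \<subseteq> C\<close> nth_nth_mem[OF ix] by blast
  then have sC: "s a \<in> C" if "\<forall>i<length ix. a i \<in> {0..<p}" for a
    using s[OF that] by simp
  show ?thesis
  proof (intro equalityI subsetI)
    fix y assume "y \<in> Phi p ` C"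
    then obtain c where "c \<in> span_mod ?M (kernel_preimage p \<alpha> \<beta> C) p vs ix" and y: "y = Phi p c"
      using span by blast
    then obtain h a where h: "h \<in> kernel_preimage p \<alpha> \<beta> C" and a: "\<forall>i<length ix. a i \<in> {0..<p}"
      and "c = madd p h (pow_prod ?M vs ix a)"
      unfolding span_mod_def by auto
    then have y: "y = Phi p (madd p h (s a))"
      using y s[OF a] by simp
    obtain k where "k \<in> ?K" and "Phi p (madd p h (s a)) = vadd p k (Phi p (s a))"
      using Phi_madd_kernel[OF \<open>p > 1\<close> C _ _ sC[OF a]] h
      unfolding kernel_preimage_def by blast
    then have "y = vadd p k (Phi p (s a))" and "k \<in> ?K"
      using y by simp_all
    then show "y \<in> ?cosets"
      using a unfolding s_def by blast
  next
    fix w assume "w \<in> ?cosets"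
    then obtain a k where a: "\<forall>i<length ix. a i \<in> {0..<p}" and "k \<in> ?K" and "w = vadd p k (Phi p (s a))"
      unfolding s_def by blast
    moreover have "vadd p (Phi p (s a)) k \<in> Phi p ` C"
      using kernel_translate_mem[OF \<open>k \<in> ?K\<close>] sC[OF a] by blast
    ultimately show "w \<in> Phi p ` C"
      by (simp add: vadd_comm)
  qed
qed

lemma exists_independent_rows:
  assumes "prime p" and C: "additive_code p \<alpha> \<beta> C" and G: "generator_matrix p \<alpha> \<beta> C us vs"
  obtains ix where "independent_mod (mixed_group p \<alpha> \<beta>) (kernel_preimage p \<alpha> \<beta> C) p vs ix"
    and "span_mod (mixed_group p \<alpha> \<beta>) (kernel_preimage p \<alpha> \<beta> C) p vs ix = C"
proof -
  let ?M = "mixed_group p \<alpha> \<beta>" and ?H = "kernel_preimage p \<alpha> \<beta> C"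
  have "p > 1" and "p > 0"
    using prime_gt_1_int[OF \<open>prime p\<close>] by auto
  have vs: "set vs \<subseteq> C"
    using G unfolding generator_matrix_def by blast
  then have "\<forall>g\<in>set vs. g [^]\<^bsub>?M\<^esub> p \<in> ?H"
    using pow_mem_kernel_preimage[OF \<open>p > 0\<close> C] by blast
  moreover have "set vs \<subseteq> carrier ?M"
    using vs subgroup.subset[OF subgroup_if_additive_code[OF \<open>p > 0\<close> C]] by blast
  ultimately obtain ix where "independent_mod ?M ?H p vs ix"
    and "span_mod ?M ?H p vs ix = generate ?M (?H \<union> set vs)"
    using comm_group.exists_independent_mod[OF comm_group_mixed_group[OF \<open>p > 0\<close>] finite_mixed_group
        subgroup_kernel_preimage[OF \<open>p > 1\<close> C] \<open>prime p\<close>] by blast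
  then show ?thesis
    using that code_eq_generate[OF \<open>p > 0\<close> C G] by simp
qed

lemma generator_count_eq_rank_add_kernel_dim:
  assumes "prime p" and C: "additive_code p \<alpha> \<beta> C" and G: "generator_matrix p \<alpha> \<beta> C us vs"
    and ind: "independent_mod (mixed_group p \<alpha> \<beta>) (kernel_preimage p \<alpha> \<beta> C) p vs ix"
    and span: "span_mod (mixed_group p \<alpha> \<beta>) (kernel_preimage p \<alpha> \<beta> C) p vs ix = C"
  shows "length us + 2 * length vs = length ix + zp_dim p (\<alpha> + nat p * \<beta>) (kernel p (\<alpha> + nat p * \<beta>) (Phi p ` C))"
proof -
  have "p > 1" and "p > 0"
    using prime_gt_1_int[OF \<open>prime p\<close>] by auto
  have "nat p ^ (length us + 2 * length vs)
      = nat p ^ (length ix + zp_dim p (\<alpha> + nat p * \<beta>) (kernel p (\<alpha> + nat p * \<beta>) (Phi p ` C)))"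
    using card_code[OF \<open>p > 0\<close> C G] ind span card_kernel_preimage[OF \<open>p > 1\<close> C]
      card_eq_zp_dim[OF \<open>prime p\<close> subgroup_kernel[OF \<open>p > 0\<close> Phi_image_subset_carrier[OF \<open>p > 0\<close> C]]]
    unfolding independent_mod_def by (simp add: power_add)
  then show ?thesis
    using \<open>p > 1\<close> by (simp add: power_inject_exp)
qed

theorem proposition11:
  fixes p :: int and \<alpha> \<beta> kb :: nat and C :: "(int list \<times> int list) set"
    and us vs :: "(int list \<times> int list) list"
  assumes "prime p" and "p > 2"
    and "additive_code p \<alpha> \<beta> C"
    and "generator_matrix p \<alpha> \<beta> C us vs"
    and "zp_dim p (\<alpha> + nat p * \<beta>) (kernel p (\<alpha> + nat p * \<beta>) (Phi p ` C))
           = length us + 2 * length vs - kb"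
    and "1 \<le> kb" and "kb \<le> length vs"
  shows "\<exists>is. length is = kb \<and> distinct is \<and>
           (\<forall>i\<in>set is. i < length vs \<and>
              Phi p (vs ! i) \<notin> kernel p (\<alpha> + nat p * \<beta>) (Phi p ` C)) \<and>
           Phi p ` C = {w. \<exists>a. (\<forall>i<kb. a i \<in> {0..<p}) \<and>
              (\<exists>k\<in>kernel p (\<alpha> + nat p * \<beta>) (Phi p ` C).
                 w = vadd p k (Phi p (msum p \<alpha> \<beta>
                        (map (\<lambda>i. msmul p (a i) (vs ! (is ! i))) [0..<kb]))))}"
proof -
  let ?H = "kernel_preimage p \<alpha> \<beta> C" and ?K = "kernel p (\<alpha> + nat p * \<beta>) (Phi p ` C)"
  note C = \<open>additive_code p \<alpha> \<beta> C\<close> and G = \<open>generator_matrix p \<alpha> \<beta> C us vs\<close>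
  have "p > 1" using \<open>p > 2\<close> by simp
  have vs: "set vs \<subseteq> C"
    using G unfolding generator_matrix_def by blast
  obtain ix where ind: "independent_mod (mixed_group p \<alpha> \<beta>) ?H p vs ix"
    and span: "span_mod (mixed_group p \<alpha> \<beta>) ?H p vs ix = C"
    using exists_independent_rows[OF \<open>prime p\<close> C G] .
  then have "distinct ix" and ix: "set ix \<subseteq> {..<length vs}" and rows: "\<forall>i\<in>set ix. vs ! i \<notin> ?H"
    unfolding independent_mod_def by auto
  have "length ix = kb"
    using generator_count_eq_rank_add_kernel_dim[OF \<open>prime p\<close> C G ind span]
      \<open>zp_dim p _ _ = _\<close> \<open>kb \<le> length vs\<close> by linarith
  moreover have "\<forall>i\<in>set ix. i < length vs \<and> Phi p (vs ! i) \<notin> ?K"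
    using ix rows vs nth_mem unfolding kernel_preimage_def by blast
  ultimately show ?thesis
    using Phi_image_eq_kernel_cosets[OF \<open>p > 1\<close> C vs ix span] \<open>distinct ix\<close> by blast
qed

end
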